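(* Let $m\ge 2$ and let $\{\Pi^n\}_{n\ge1}$ be any sequence of parsimonious protocols with $m$ memory states such that $\lim_{n\to\infty}U^R(\Pi^n)=\sup_\Pi U^R(\Pi)$. Exclude the case in which both $\gamma^{m-2}\le\kappa$ and $p=\tfrac12$. Then $\lim_{n\to\infty}U^S(\Pi^n)$ exists and \[ \lim_{n\to\infty}U^S(\Pi^n)= \begin{cases} p+\dfrac{2p-1}{\gamma^{m-2}-1}, & \text{if } \gamma^{m-2}>\kappa,\\[0.6em] 1, & \text{if } \gamma^{m-2}\le\kappa \text{ and } p>\tfrac12,\\[0.3em] 0, & \text{if } \gamma^{m-2}\le\kappa \text{ and } p<\tfrac12. \end{cases} \]
   Context: Setting. The state of nature is $\theta\in\Theta=\{H,L\}$ with prior $\Pr(\theta=H)=p\in(0,1)$. A sender privately observes $\theta$; a receiver does not. $S$ is a finite signal set; conditional on $\theta$, signals are i.i.d. with distribution $\pi_\theta$ on $S$, where $\pi_\theta(s)>0$ for all $s\in S,\theta\in\Theta$, and $\pi_H\neq\pi_L$. The receiver has the set of memory states $M=\{1,\dots,m\}$ and chooses a protocol $\Pi=(f,g,a)$: a transition function $f:M\times S\to\Delta(M)$ ($f(i,s)(j)$ is the probability of moving from memory state $i$ to $j$ after signal $s$), an initial distribution $g\in\Delta(M)$ of $m_0$, and an action rule $a:M\to[0,1]$ (probability of action $H$ if the game ends in that memory state). A sender strategy is $\sigma:M\times\Theta\to[0,1]$, the probability of stopping in the current memory state given $\theta$. Timing: $m_0\sim g$; in each period $t=0,1,\dots$,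 with current memory state $m_t$, the game ends if $m_t$ is absorbing ($f(m_t,s)(m_t)=1$ for all $s$); otherwise the sender stops with probability $\sigma(m_t,\theta)$, ending the game; if not stopped, a signal $s_t\sim\pi_\theta$ is generated and $m_{t+1}\sim f(m_t,s_t)$. When the game ends in state $m_t$ the receiver takes action $H$ with probability $a(m_t)$ and $L$ otherwise. The receiver's payoff is $1$ if the action equals $\theta$ and $0$ otherwise; the sender's payoff is $1$ if the action is $H$ and $0$ otherwise; there is no discounting; if the game never ends both get $0$. $U^S(\Pi,\sigma),U^R(\Pi,\sigma)$ denote expected payoffs, $\mathrm{br}(\Pi)=\arg\sup_\sigma U^S(\Pi,\sigma)$ is the set of sender best responses, and $U^R(\Pi):=U^R(\Pi,\sigma)$, $U^S(\Pi):=U^S(\Pi,\sigma)$ for $\sigma\in\mathrm{br}(\Pi)$. The supremum $\sup_\Pi$ is over all protocols on $M$. Since $\pi_\theta$ has full support, which transitions have positive probability does not depend on $\theta$; absorbing/transient refer to the Markov chain on $M$ induced by $f$ with signals from $\pi_\theta$. A protocol is parsimonious if (i) it has exactly two absorbing memory states, one in which $a=0$ and one in which $a=1$, and (ii) all other memory states are transient with $a=0$. Signal informativeness: $\bar\ell=\max_{s}\pi_H(s)/\pi_L(s)$, $\underline\ell=\min_{s}\pi_H(s)/\pi_L(s)$, $\gamma=\bar\ell/\underline\ell\in(1,\infty)$. Prior skewness: $\kappa=\max\{p/(1-p),(1-p)/p\}$. *)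

theory Defs
  imports Complex_Main
begin

text \<open>States of nature: True = H, False = L.  Memory states M = {1..m}.
  Signals: a finite type 's.  The signal distributions are sg :: bool => 's => real,
  sg True = pi_H, sg False = pi_L.\<close>

record 's protocol =
  trans :: "nat \<Rightarrow> 's \<Rightarrow> nat \<Rightarrow> real"
  init  :: "nat \<Rightarrow> real"
  act   :: "nat \<Rightarrow> real"

definition is_protocol :: "nat \<Rightarrow> 's protocol \<Rightarrow> bool" where
  "is_protocol m P \<longleftrightarrow>
     (\<forall>i\<in>{1..m}. \<forall>s. (\<forall>j\<in>{1..m}. 0 \<le> trans P i s j) \<and> (\<Sum>j=1..m. trans P i s j) = 1) \<and>
     (\<forall>j\<in>{1..m}. 0 \<le> init P j) \<and> (\<Sum>j=1..m. init P j) = 1 \<and>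
     (\<forall>i\<in>{1..m}. 0 \<le> act P i \<and> act P i \<le> 1)"

definition is_strategy :: "nat \<Rightarrow> (nat \<Rightarrow> bool \<Rightarrow> real) \<Rightarrow> bool" where
  "is_strategy m \<sigma> \<longleftrightarrow> (\<forall>i\<in>{1..m}. \<forall>\<theta>. 0 \<le> \<sigma> i \<theta> \<and> \<sigma> i \<theta> \<le> 1)"

definition absorbing :: "'s protocol \<Rightarrow> nat \<Rightarrow> bool" where
  "absorbing P i \<longleftrightarrow> (\<forall>s. trans P i s i = 1)"

definition step :: "nat \<Rightarrow> (bool \<Rightarrow> 's::finite \<Rightarrow> real) \<Rightarrow> 's protocol \<Rightarrow>
    (nat \<Rightarrow> bool \<Rightarrow> real) \<Rightarrow> bool \<Rightarrow> (nat \<Rightarrow> real) \<Rightarrow> (nat \<Rightarrow> real)" where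
  "step m sg P \<sigma> \<theta> q = (\<lambda>j. \<Sum>i\<in>{1..m}.
      (if absorbing P i then 0
       else q i * (1 - \<sigma> i \<theta>) * (\<Sum>s\<in>UNIV. sg \<theta> s * trans P i s j)))"

definition alive :: "nat \<Rightarrow> (bool \<Rightarrow> 's::finite \<Rightarrow> real) \<Rightarrow> 's protocol \<Rightarrow>
    (nat \<Rightarrow> bool \<Rightarrow> real) \<Rightarrow> bool \<Rightarrow> nat \<Rightarrow> nat \<Rightarrow> real" where
  "alive m sg P \<sigma> \<theta> t = (step m sg P \<sigma> \<theta> ^^ t) (init P)"

definition ends :: "nat \<Rightarrow> (bool \<Rightarrow> 's::finite \<Rightarrow> real) \<Rightarrow> 's protocol \<Rightarrow>
    (nat \<Rightarrow> bool \<Rightarrow> real) \<Rightarrow> bool \<Rightarrow> nat \<Rightarrow> nat \<Rightarrow> real" where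
  "ends m sg P \<sigma> \<theta> t i = alive m sg P \<sigma> \<theta> t i * (if absorbing P i then 1 else \<sigma> i \<theta>)"

definition probH :: "nat \<Rightarrow> (bool \<Rightarrow> 's::finite \<Rightarrow> real) \<Rightarrow> 's protocol \<Rightarrow>
    (nat \<Rightarrow> bool \<Rightarrow> real) \<Rightarrow> bool \<Rightarrow> real" where
  "probH m sg P \<sigma> \<theta> = (\<Sum>t. \<Sum>i=1..m. ends m sg P \<sigma> \<theta> t i * act P i)"

definition probL :: "nat \<Rightarrow> (bool \<Rightarrow> 's::finite \<Rightarrow> real) \<Rightarrow> 's protocol \<Rightarrow>
    (nat \<Rightarrow> bool \<Rightarrow> real) \<Rightarrow> bool \<Rightarrow> real" where
  "probL m sg P \<sigma> \<theta> = (\<Sum>t. \<Sum>i=1..m. ends m sg P \<sigma> \<theta> t i * (1 - act P i))"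

definition US :: "nat \<Rightarrow> (bool \<Rightarrow> 's::finite \<Rightarrow> real) \<Rightarrow> real \<Rightarrow> 's protocol \<Rightarrow>
    (nat \<Rightarrow> bool \<Rightarrow> real) \<Rightarrow> real" where
  "US m sg p P \<sigma> = p * probH m sg P \<sigma> True + (1 - p) * probH m sg P \<sigma> False"

definition UR :: "nat \<Rightarrow> (bool \<Rightarrow> 's::finite \<Rightarrow> real) \<Rightarrow> real \<Rightarrow> 's protocol \<Rightarrow>
    (nat \<Rightarrow> bool \<Rightarrow> real) \<Rightarrow> real" where
  "UR m sg p P \<sigma> = p * probH m sg P \<sigma> True + (1 - p) * probL m sg P \<sigma> False"

definition US_val :: "nat \<Rightarrow> (bool \<Rightarrow> 's::finite \<Rightarrow> real) \<Rightarrow> real \<Rightarrow> 's protocol \<Rightarrow> real" where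
  "US_val m sg p P = Sup {US m sg p P \<sigma> | \<sigma>. is_strategy m \<sigma>}"

definition br :: "nat \<Rightarrow> (bool \<Rightarrow> 's::finite \<Rightarrow> real) \<Rightarrow> real \<Rightarrow> 's protocol \<Rightarrow>
    (nat \<Rightarrow> bool \<Rightarrow> real) set" where
  "br m sg p P = {\<sigma>. is_strategy m \<sigma> \<and> US m sg p P \<sigma> = US_val m sg p P}"

text \<open>Receiver payoff under a best response (ties broken in the receiver's favour).\<close>
definition UR_val :: "nat \<Rightarrow> (bool \<Rightarrow> 's::finite \<Rightarrow> real) \<Rightarrow> real \<Rightarrow> 's protocol \<Rightarrow> real" where
  "UR_val m sg p P = Sup {UR m sg p P \<sigma> | \<sigma>. \<sigma> \<in> br m sg p P}"

definition UR_sup :: "nat \<Rightarrow> (bool \<Rightarrow> 's::finite \<Rightarrow> real) \<Rightarrow> real \<Rightarrow> real" where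
  "UR_sup m sg p = Sup {UR_val m sg p P | P. is_protocol m P}"

definition edge :: "nat \<Rightarrow> 's protocol \<Rightarrow> nat \<Rightarrow> nat \<Rightarrow> bool" where
  "edge m P i j \<longleftrightarrow> i \<in> {1..m} \<and> j \<in> {1..m} \<and> (\<exists>s. trans P i s j > 0)"

definition transient :: "nat \<Rightarrow> 's protocol \<Rightarrow> nat \<Rightarrow> bool" where
  "transient m P i \<longleftrightarrow> (\<exists>j. (edge m P)\<^sup>*\<^sup>* i j \<and> \<not> (edge m P)\<^sup>*\<^sup>* j i)"

definition parsimonious :: "nat \<Rightarrow> 's protocol \<Rightarrow> bool" where
  "parsimonious m P \<longleftrightarrow> is_protocol m P \<and>
     (\<exists>i0\<in>{1..m}. \<exists>i1\<in>{1..m}. i0 \<noteq> i1 \<and> {i\<in>{1..m}. absorbing P i} = {i0, i1} \<and>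
        act P i0 = 0 \<and> act P i1 = 1) \<and>
     (\<forall>i\<in>{1..m}. \<not> absorbing P i \<longrightarrow> transient m P i \<and> act P i = 0)"

definition gamma :: "(bool \<Rightarrow> 's::finite \<Rightarrow> real) \<Rightarrow> real" where
  "gamma sg = Max (range (\<lambda>s. sg True s / sg False s)) / Min (range (\<lambda>s. sg True s / sg False s))"

definition kappa :: "real \<Rightarrow> real" where
  "kappa p = max (p / (1 - p)) ((1 - p) / p)"

end

theory Submission
  imports Defs
begin

text \<open>
  Against a parsimonious protocol the sender never stops, since stopping can only lead to
  action L. The protocol is therefore summarised by the probabilities \<open>x\<close> and \<open>y\<close> of
  absorption in the H-state when the state is H resp. L: the receiver gets
  \<open>p x + (1 - p)(1 - y)\<close> and the sender \<open>p x + (1 - p) y\<close>.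

  The key constraint is \<open>x (1 - y) \<le> \<gamma>^(m-2) y (1 - x)\<close>. It comes from comparing the expected
  occupation times of the transient states under H and under L: restarting the chain after
  absorption makes the occupation measures stationary, flow balance across any cut of the
  transient states shows that their ratio jumps by at most \<open>\<gamma>\<close> across the cut, and so it
  varies by at most \<open>\<gamma>^(m-3)\<close> overall; one more factor \<open>\<gamma>\<close> enters at absorption.
  Conversely, ladder protocols, which climb on the signal most indicative of H, descend on the
  one most indicative of L and are absorbed at the ends with small probability, approach every
  point of the frontier of this region.

  Hence an optimal sequence maximises \<open>p x - (1 - p) y\<close> over the region. The maximiser is
  unique and the objective falls off quadratically away from it, which forces convergence:
  to an interior frontier point if \<open>\<gamma>^(m-2) > \<kappa>\<close>, and otherwise to the corner
  \<open>x = y = 1\<close> (if \<open>p > 1/2\<close>) or \<open>x = y = 0\<close> (if \<open>p < 1/2\<close>).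
\<close>

lemma sum_pos_iff_ex:
  fixes f :: "'a \<Rightarrow> 'b::{ordered_comm_monoid_add, linorder}"
  assumes "finite A" and "\<And>x. x \<in> A \<Longrightarrow> 0 \<le> f x"
  shows "0 < (\<Sum>x\<in>A. f x) \<longleftrightarrow> (\<exists>x\<in>A. 0 < f x)"
proof
  assume "0 < (\<Sum>x\<in>A. f x)"
  then have "\<not> (\<forall>x\<in>A. f x = 0)" by (metis sum.neutral less_irrefl)
  then show "\<exists>x\<in>A. 0 < f x" using assms(2) by (auto simp: order.strict_iff_order)
next
  assume "\<exists>x\<in>A. 0 < f x"
  then obtain x where "x \<in> A" "0 < f x" by blast
  then show "0 < (\<Sum>x\<in>A. f x)" using sum_pos2[OF assms(1)] assms(2) by blast
qed

text \<open>
  If every proper cut of \<open>A\<close> can be crossed from inside to outside at the cost of a factor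
  \<open>g\<close>, then the values of \<open>\<rho>\<close> spread by at most \<open>g^(card A - 1)\<close>: the set of points whose
  value is within \<open>g^l\<close> of the maximum gains a point with each increment of \<open>l\<close>.
\<close>

lemma card_within_power_of_max:
  fixes \<rho> :: "'a \<Rightarrow> real" and g :: real
  assumes fin: "finite A" and g1: "g \<ge> 1" and pos: "\<forall>x\<in>A. \<rho> x > 0"
    and cut: "\<And>S. S \<subseteq> A \<Longrightarrow> S \<noteq> {} \<Longrightarrow> S \<noteq> A \<Longrightarrow> \<exists>x\<in>S. \<exists>y\<in>A-S. \<rho> x \<le> g * \<rho> y"
    and l: "l < card A"
  shows "Suc l \<le> card {z\<in>A. Max (\<rho> ` A) \<le> g ^ l * \<rho> z}"
proof -
  define M where "M = Max (\<rho> ` A)"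
  define S where "S l = {z\<in>A. M \<le> g ^ l * \<rho> z}" for l
  have Ssub: "S l \<subseteq> A" for l unfolding S_def by auto
  then have finS: "finite (S l)" for l using fin by (rule finite_subset)
  have Smono: "S l \<subseteq> S (Suc l)" for l
  proof
    fix z assume "z \<in> S l"
    then have z: "z \<in> A" "M \<le> g ^ l * \<rho> z" unfolding S_def by auto
    have "g ^ l * \<rho> z \<le> g ^ Suc l * \<rho> z"
      using g1 pos z(1) by (intro mult_right_mono) (auto simp: power_increasing less_imp_le)
    then show "z \<in> S (Suc l)" using z unfolding S_def by auto
  qed
  have "Suc l \<le> card (S l)" if "l < card A" for l
    using that
  proof (induction l)
    case 0
    have "A \<noteq> {}" using 0 by auto
    then have "M \<in> \<rho> ` A" unfolding M_def using fin by (intro Max_in) auto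
    then have "S 0 \<noteq> {}" unfolding S_def by auto
    then show ?case using finS by (simp add: Suc_le_eq card_gt_0_iff)
  next
    case (Suc l)
    have IH: "Suc l \<le> card (S l)" using Suc by simp
    show ?case
    proof (cases "S l = A")
      case True
      then have "S (Suc l) = A" using Smono[of l] Ssub[of "Suc l"] by blast
      then show ?thesis using Suc.prems by simp
    next
      case False
      have "S l \<noteq> {}" using IH by auto
      then obtain a b where a: "a \<in> S l" and b: "b \<in> A - S l" and ab: "\<rho> a \<le> g * \<rho> b"
        using cut[OF Ssub _ False] by blast
      have "M \<le> g ^ l * \<rho> a" using a unfolding S_def by auto
      also have "\<dots> \<le> g ^ Suc l * \<rho> b" using mult_left_mono[OF ab, of "g ^ l"] g1 by simp
      finally have "insert b (S l) \<subseteq> S (Suc l)" using b Smono unfolding S_def by auto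
      then have "card (insert b (S l)) \<le> card (S (Suc l))" by (rule card_mono[OF finS])
      then show ?thesis using b IH finS by simp
    qed
  qed
  then show ?thesis using l unfolding S_def M_def .
qed

lemma le_power_card_of_cuts:
  fixes \<rho> :: "'a \<Rightarrow> real" and g :: real
  assumes fin: "finite A" and g1: "g \<ge> 1" and pos: "\<forall>x\<in>A. \<rho> x > 0"
    and cut: "\<And>S. S \<subseteq> A \<Longrightarrow> S \<noteq> {} \<Longrightarrow> S \<noteq> A \<Longrightarrow> \<exists>x\<in>S. \<exists>y\<in>A-S. \<rho> x \<le> g * \<rho> y"
    and x: "x \<in> A" and y: "y \<in> A"
  shows "\<rho> x \<le> g ^ (card A - 1) * \<rho> y"
proof -
  let ?S = "{z\<in>A. Max (\<rho> ` A) \<le> g ^ (card A - 1) * \<rho> z}"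
  have "card A > 0" using fin x card_gt_0_iff by blast
  have "Suc (card A - 1) \<le> card ?S"
    by (rule card_within_power_of_max[OF fin g1 pos]) (fact cut, use \<open>card A > 0\<close> in simp)
  then have "card A \<le> card ?S" using \<open>card A > 0\<close> by simp
  then have "?S = A" by (intro card_seteq[OF fin]) auto
  then have "Max (\<rho> ` A) \<le> g ^ (card A - 1) * \<rho> y" using y by blast
  moreover have "\<rho> x \<le> Max (\<rho> ` A)" using fin x by (intro Max_ge) auto
  ultimately show ?thesis by linarith
qed

lemma mixture_cross_ratio_le:
  fixes G g0 g1 c xH xL bH bL :: real
  assumes G: "G \<ge> 1" and nn: "0 \<le> g0" "0 \<le> g1" "0 \<le> xH" "0 \<le> xL" "0 \<le> bH" "0 \<le> bL"
    and sH: "xH + bH = c" and sL: "xL + bL = c"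
    and core: "xH * bL \<le> G * (xL * bH)"
  shows "(g1 + xH) * (g0 + bL) \<le> G * ((g1 + xL) * (g0 + bH))"
proof (cases "c = 0")
  case True
  then have "xH = 0" "bL = 0" "xL = 0" "bH = 0" using sH sL nn by auto
  then show ?thesis using mult_right_mono[OF G, of "g1 * g0"] nn by simp
next
  case False
  then have c: "c > 0" using sH nn by linarith
  have GbH: "bL * bH \<le> G * bL * bH" and GxH: "xH * xL \<le> G * xH * xL"
    using mult_right_mono[OF G, of "bL * bH"] mult_right_mono[OF G, of "xH * xL"] nn
    by (simp_all add: mult.assoc)
  have "bL * c = bL * xH + bL * bH" unfolding sH[symmetric] by (simp add: algebra_simps)
  also have "\<dots> \<le> G * bH * c" using core GbH unfolding sL[symmetric] by (simp add: algebra_simps)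
  finally have "bL * c \<le> G * bH * c" .
  then have bL: "bL \<le> G * bH" using c by simp
  have "xH * c = xH * xL + xH * bL" unfolding sL[symmetric] by (simp add: algebra_simps)
  also have "\<dots> \<le> G * xL * c" using core GxH unfolding sH[symmetric] by (simp add: algebra_simps)
  finally have "xH * c \<le> G * xL * c" .
  then have xH: "xH \<le> G * xL" using c by simp
  have "g1 * g0 \<le> G * (g1 * g0)" using mult_right_mono[OF G, of "g1 * g0"] nn by simp
  moreover have "g1 * bL \<le> G * (g1 * bH)" using bL nn by (metis mult.left_commute mult_left_mono)
  moreover have "xH * g0 \<le> G * (xL * g0)" using xH nn by (metis mult.assoc mult_right_mono)
  ultimately show ?thesis using core by (simp add: algebra_simps)
qed

lemma inverse_one_plus_add_bounds:
  fixes a d :: real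
  assumes "0 \<le> a" and "0 \<le> d"
  shows "1 / (1 + a) - d \<le> 1 / (1 + a + d)" and "1 / (1 + a + d) \<le> 1 / (1 + a)"
proof -
  have "1 * 1 \<le> (1 + a) * (1 + a + d)" using assms by (intro mult_mono) auto
  then have "d / ((1 + a) * (1 + a + d)) \<le> d / 1" using assms by (intro divide_left_mono) auto
  moreover have "1 / (1 + a) - 1 / (1 + a + d) = d / ((1 + a) * (1 + a + d))"
    using assms by (simp add: field_simps)
  ultimately show "1 / (1 + a) - d \<le> 1 / (1 + a + d)" by linarith
  show "1 / (1 + a + d) \<le> 1 / (1 + a)" using assms by (simp add: frac_le)
qed

lemma geometric_bound_of_periodic_contraction:
  fixes f :: "nat \<Rightarrow> real"
  assumes N: "N \<ge> 1" and c: "0 < c" "c < 1" and f1: "\<And>t. f t \<le> 1"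
    and contr: "\<And>t. f (N + t) \<le> c * f t"
  shows "\<exists>C r. 0 < r \<and> r < 1 \<and> (\<forall>t. f t \<le> C * r ^ t)"
proof -
  have bnd: "f t \<le> c ^ (t div N)" for t
  proof (induction t rule: less_induct)
    case (less t)
    show ?case
    proof (cases "t < N")
      case True then show ?thesis using f1 by simp
    next
      case False
      then obtain t' where t': "t = N + t'" by (metis le_add_diff_inverse not_less)
      have "f t \<le> c * f t'" unfolding t' by (rule contr)
      also have "\<dots> \<le> c * c ^ (t' div N)" using less.IH[of t'] t' N c by (intro mult_left_mono) auto
      also have "\<dots> = c ^ (t div N)" using t' N by simp
      finally show ?thesis .
    qed
  qed
  define r where "r = root N c"
  have r: "0 < r" "r < 1" "r ^ N = c" unfolding r_def using N c by (simp_all add: real_root_gt_zero)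
  have "c * c ^ (t div N) \<le> r ^ t" for t
  proof -
    have "t div N * N + t mod N = t" by (rule div_mult_mod_eq)
    moreover have "t mod N < N" using N by simp
    moreover have "N * Suc (t div N) = t div N * N + N" by simp
    ultimately have "t \<le> N * Suc (t div N)" by linarith
    then have "r ^ (N * Suc (t div N)) \<le> r ^ t" using r by (intro power_decreasing) auto
    then show ?thesis by (simp only: power_mult r(3) power_Suc)
  qed
  then have geo: "c ^ (t div N) \<le> (1 / c) * r ^ t" for t using c by (simp add: field_simps)
  have "f t \<le> (1 / c) * r ^ t" for t using bnd[of t] geo[of t] by linarith
  then show ?thesis using r by blast
qed

lemma tendsto_of_quadratic_gap:
  fixes F a :: "nat \<Rightarrow> real"
  assumes c: "c > 0" and gap: "\<And>n. F n \<le> V - c * (a n - L) ^ 2" and F: "F \<longlonglongrightarrow> V"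
  shows "a \<longlonglongrightarrow> L"
proof -
  have gap_lim: "(\<lambda>n. (V - F n) / c) \<longlonglongrightarrow> (V - V) / c"
    by (intro tendsto_divide tendsto_diff tendsto_const F) (use c in auto)
  have sq_lim: "(\<lambda>n. (a n - L) ^ 2) \<longlonglongrightarrow> 0"
  proof (rule tendsto_sandwich[of "\<lambda>_. 0" _ _ "\<lambda>n. (V - F n) / c"])
    show "\<forall>\<^sub>F n in sequentially. 0 \<le> (a n - L) ^ 2" by simp
    have "(a n - L) ^ 2 \<le> (V - F n) / c" for n
    proof -
      have "c * (a n - L) ^ 2 \<le> V - F n" using gap[of n] by linarith
      then show ?thesis using c by (simp add: le_divide_eq mult.commute)
    qed
    then show "\<forall>\<^sub>F n in sequentially. (a n - L) ^ 2 \<le> (V - F n) / c"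
      by (intro always_eventually allI)
    show "(\<lambda>n. 0) \<longlonglongrightarrow> 0" by simp
    show "(\<lambda>n. (V - F n) / c) \<longlonglongrightarrow> 0" using gap_lim by simp
  qed
  have "(\<lambda>n. sqrt ((a n - L) ^ 2)) \<longlonglongrightarrow> sqrt 0" by (intro tendsto_real_sqrt sq_lim)
  then have "(\<lambda>n. \<bar>a n - L\<bar>) \<longlonglongrightarrow> 0" by simp
  then have "(\<lambda>n. a n - L) \<longlonglongrightarrow> 0" by (simp add: tendsto_rabs_zero_iff)
  then show ?thesis by (rule LIM_zero_cancel)
qed

section \<open>The feasible region\<close>

text \<open>
  The pairs \<open>(x, y) \<in> [0,1]\<^sup>2\<close> with \<open>x (1 - y) \<le> G y (1 - x)\<close> are those on or above
  the frontier \<open>y = x / (G - (G - 1) x)\<close>.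
\<close>

definition frontier :: "real \<Rightarrow> real \<Rightarrow> real" where
  "frontier G x = x / (G - (G - 1) * x)"

lemma frontier_denominator_bounds:
  fixes x G :: real
  assumes G: "G \<ge> 1" and x: "0 \<le> x" "x \<le> 1"
  shows "1 \<le> G - (G - 1) * x" and "G - (G - 1) * x \<le> G"
proof -
  have "(G - 1) * x \<le> (G - 1) * 1" using G x by (intro mult_left_mono) auto
  then show "1 \<le> G - (G - 1) * x" by simp
  show "G - (G - 1) * x \<le> G" using G x by simp
qed

lemma frontier_le:
  fixes x y G :: real
  assumes G: "G \<ge> 1" and x: "0 \<le> x" "x \<le> 1" and feasible: "x * (1 - y) \<le> G * (y * (1 - x))"
  shows "frontier G x \<le> y"
proof -
  have "x \<le> y * (G - (G - 1) * x)" using feasible by (simp add: algebra_simps)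
  then show ?thesis unfolding frontier_def using frontier_denominator_bounds(1)[OF G x]
    by (simp add: divide_le_eq)
qed

lemma objective_le_frontier:
  fixes x y G p :: real
  assumes G: "G \<ge> 1" and x: "0 \<le> x" "x \<le> 1" and feasible: "x * (1 - y) \<le> G * (y * (1 - x))"
    and p: "p < 1"
  shows "p * x - (1 - p) * y \<le> p * x - (1 - p) * frontier G x"
  using mult_left_mono[OF frontier_le[OF G x feasible], of "1 - p"] p by simp

text \<open>
  If \<open>(1 - p) G > p\<close> and \<open>p G > 1 - p\<close> the objective \<open>p x - (1 - p) y\<close> is maximised on
  the frontier at \<open>x\<^sub>* = (G - D\<^sub>*) / (G - 1)\<close>, where \<open>D\<^sub>* = \<surd>((1 - p) G / p)\<close> is the
  value of the frontier denominator there; otherwise at a corner.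
\<close>

lemma interior_objective_gap:
  fixes x y G p :: real
  assumes G: "G > 1" and x: "0 \<le> x" "x \<le> 1" and feasible: "x * (1 - y) \<le> G * (y * (1 - x))"
    and p: "0 < p" "p < 1"
    and Ds: "Ds > 0" "p * Ds ^ 2 = (1 - p) * G"
    and xs: "xs = (G - Ds) / (G - 1)"
  shows "p * x - (1 - p) * y \<le> (p * xs - (1 - p) * (xs / Ds)) - p * (G - 1) / G * (x - xs) ^ 2"
proof -
  define D where "D = G - (G - 1) * x"
  have D1: "1 \<le> D" "D \<le> G" unfolding D_def using frontier_denominator_bounds[OF _ x] G by auto
  have Dsdef: "Ds = G - (G - 1) * xs" unfolding xs using G by (simp add: field_simps)
  have a: "x * Ds - xs * D = G * (x - xs)" unfolding D_def Dsdef by (simp add: algebra_simps)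
  have c: "x / D - xs / Ds = G * (x - xs) / (D * Ds)"
    using a D1 Ds(1) by (simp add: field_simps)
  have b: "(1 - p) * G = p * Ds ^ 2" using Ds(2) by simp
  have d: "(1 - p) * (x / D - xs / Ds) = p * Ds * (x - xs) / D"
  proof -
    have "(1 - p) * (x / D - xs / Ds) = ((1 - p) * G) * (x - xs) / (D * Ds)" unfolding c by simp
    also have "\<dots> = p * Ds ^ 2 * (x - xs) / (D * Ds)" unfolding b ..
    also have "\<dots> = p * Ds * (x - xs) / D" using Ds(1) D1 by (simp add: power2_eq_square field_simps)
    finally show ?thesis .
  qed
  have e: "Ds - D = (G - 1) * (x - xs)" unfolding D_def Dsdef by (simp add: algebra_simps)
  have f: "p * Ds * (x - xs) / D = p * (x - xs) + p * (G - 1) * (x - xs) ^ 2 / D"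
  proof -
    have "p * Ds * (x - xs) = p * D * (x - xs) + p * (Ds - D) * (x - xs)"
      by (simp add: algebra_simps)
    also have "\<dots> = p * D * (x - xs) + p * (G - 1) * (x - xs) ^ 2"
      unfolding e by (simp add: power2_eq_square algebra_simps)
    finally show ?thesis using D1 by (simp add: field_simps)
  qed
  have g: "p * (G - 1) * (x - xs) ^ 2 / G \<le> p * (G - 1) * (x - xs) ^ 2 / D"
    using D1 G p by (intro divide_left_mono) auto
  have "p * x - (1 - p) * y \<le> p * x - (1 - p) * (x / D)"
    using objective_le_frontier[OF _ x feasible p(2)] G
    unfolding D_def frontier_def by simp
  also have "\<dots> = (p * xs - (1 - p) * (xs / Ds)) - (p * Ds * (x - xs) / D - p * (x - xs))"
    using d by (simp add: algebra_simps)
  also have "\<dots> = (p * xs - (1 - p) * (xs / Ds)) - p * (G - 1) * (x - xs) ^ 2 / D"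
    unfolding f by simp
  also have "\<dots> \<le> (p * xs - (1 - p) * (xs / Ds)) - p * (G - 1) * (x - xs) ^ 2 / G" using g by simp
  finally show ?thesis by simp
qed

lemma corner_objective_gap:
  fixes x y G p :: real
  assumes G: "G \<ge> 1" and x: "0 \<le> x" "x \<le> 1" and feasible: "x * (1 - y) \<le> G * (y * (1 - x))"
    and p: "1/2 < p" "p < 1" and Gt: "(1 - p) * G \<le> p"
  shows "p * x - (1 - p) * y \<le> (2 * p - 1) - (2 * p - 1) * (1 - x) ^ 2"
proof -
  define D where "D = G - (G - 1) * x"
  have D1: "1 \<le> D" "D \<le> G" unfolding D_def using frontier_denominator_bounds[OF G x] by auto
  have h: "p * x - (1 - p) * y \<le> p * x - (1 - p) * (x / D)" 
    using objective_le_frontier[OF G x feasible p(2)] unfolding D_def frontier_def .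
  have a: "x / D - 1 = G * (x - 1) / D" using D1 unfolding D_def by (simp add: field_simps)
  have "p * x - (1 - p) * (x / D) = (2 * p - 1) - (1 - x) * (p - (1 - p) * G / D)"
  proof -
    define q where "q = G / D"
    have a': "x / D = 1 + q * (x - 1)" using a unfolding q_def by simp
    have q': "(1 - p) * G / D = (1 - p) * q" unfolding q_def by simp
    show ?thesis unfolding a' q' by (simp add: algebra_simps)
  qed
  moreover have "p - (1 - p) * G / D \<ge> (2 * p - 1) * (1 - x)"
  proof -
    have i1: "p - (1 - p) * G / D = (p - (1 - p) * G) + (1 - p) * G * (D - 1) / D"
      using D1 by (simp add: field_simps)
    have i2: "D - 1 = (G - 1) * (1 - x)" unfolding D_def by (simp add: algebra_simps)
    have i3: "(1 - p) * G * (D - 1) / D \<ge> (1 - p) * (G - 1) * (1 - x)"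
    proof -
      have "(1 - p) * G * (D - 1) / D = (1 - p) * (G - 1) * (1 - x) * (G / D)" unfolding i2 by simp
      moreover have "G / D \<ge> 1" using D1 by simp
      moreover have "0 \<le> (1 - p) * (G - 1) * (1 - x)" using p G x by simp
      ultimately show ?thesis
        by (metis mult_le_cancel_left1 order.strict_iff_not not_le mult_left_mono mult_1_right)
    qed
    have i4: "p - (1 - p) * G \<ge> (p - (1 - p) * G) * (1 - x)"
      using Gt x by (simp add: mult_left_le)
    have "(p - (1 - p) * G) * (1 - x) + (1 - p) * (G - 1) * (1 - x) = (2 * p - 1) * (1 - x)"
      by (simp add: algebra_simps)
    then show ?thesis using i1 i3 i4 by linarith
  qed
  then have "(1 - x) * (p - (1 - p) * G / D) \<ge> (1 - x) * ((2 * p - 1) * (1 - x))"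
    using x by (intro mult_left_mono) auto
  ultimately show ?thesis using h by (simp add: power2_eq_square algebra_simps)
qed

lemma kappa_ge_1: "0 < p \<Longrightarrow> p < 1 \<Longrightarrow> 1 \<le> kappa p"
  unfolding kappa_def by (cases "p \<le> 1/2") (auto simp: le_divide_eq le_max_iff_disj)

lemma interior_optimum:
  fixes G p :: real
  assumes p: "0 < p" "p < 1" and G: "G > kappa p"
  defines "D \<equiv> sqrt ((1 - p) * G / p)"
  defines "x \<equiv> (G - D) / (G - 1)"
  shows "1 < G" and "0 < D" and "p * D ^ 2 = (1 - p) * G" and "0 < x" and "x < 1"
    and "frontier G x = x / D" and "p * x + (1 - p) * frontier G x = p + (2 * p - 1) / (G - 1)"
proof -
  have Gk1: "(1 - p) * G > p" and Gk2: "p * G > 1 - p"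
    using G p unfolding kappa_def by (simp_all add: divide_less_eq mult.commute)
  show G1: "1 < G" using G kappa_ge_1[OF p] by simp
  have pos: "(1 - p) * G / p > 0" using p G1 by simp
  show D0: "0 < D" unfolding D_def using pos by simp
  have D2: "D ^ 2 = (1 - p) * G / p" unfolding D_def using pos by simp
  then show pD: "p * D ^ 2 = (1 - p) * G" using p by simp
  have "D ^ 2 > 1 ^ 2" unfolding D2 using Gk1 p by (simp add: less_divide_eq)
  then have D1: "D > 1" using D0 by (meson power_less_imp_less_base less_imp_le)
  have "(1 - p) * G < (p * G) * G" using Gk2 G1 by (intro mult_strict_right_mono) auto
  then have "D ^ 2 < G ^ 2" unfolding D2
    using p by (simp add: divide_less_eq power2_eq_square algebra_simps)
  then have DG: "D < G"
    using G1 by (meson power_less_imp_less_base less_imp_le less_trans zero_less_one)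
  show "0 < x" unfolding x_def using DG G1 by simp
  show "x < 1" unfolding x_def using D1 G1 by (simp add: divide_less_eq)
  have "D = G - (G - 1) * x" unfolding x_def using G1 by (simp add: field_simps)
  then show fx: "frontier G x = x / D" unfolding frontier_def by simp
  have "(1 - p) * frontier G x = ((1 - p) * G - (1 - p) * D) / ((G - 1) * D)"
    using G1 D0 unfolding fx by (simp add: x_def field_simps)
  also have "\<dots> = (p * D ^ 2 - (1 - p) * D) / ((G - 1) * D)" unfolding pD ..
  also have "\<dots> = (p * D - (1 - p)) / (G - 1)"
    using D0 G1 by (simp add: field_simps power2_eq_square)
  finally have "(1 - p) * frontier G x = (p * D - (1 - p)) / (G - 1)" .
  moreover have "p * x = (p * G - p * D) / (G - 1)" unfolding x_def by (simp add: algebra_simps)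
  ultimately have "p * x + (1 - p) * frontier G x = (p * G - (1 - p)) / (G - 1)"
    by (simp add: add_divide_distrib[symmetric])
  then show "p * x + (1 - p) * frontier G x = p + (2 * p - 1) / (G - 1)"
    using G1 by (simp add: field_simps)
qed

locale signals =
  fixes sg :: "bool \<Rightarrow> 's::finite \<Rightarrow> real"
  assumes pos: "\<And>\<theta> s. sg \<theta> s > 0"
    and psum: "\<And>\<theta>. (\<Sum>s\<in>UNIV. sg \<theta> s) = 1"
begin

definition max_lr where "max_lr = Max (range (\<lambda>s. sg True s / sg False s))"
definition min_lr where "min_lr = Min (range (\<lambda>s. sg True s / sg False s))"

lemma gamma_eq: "gamma sg = max_lr / min_lr"
  unfolding gamma_def max_lr_def min_lr_def ..

lemma min_lr_pos: "min_lr > 0"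
proof -
  have "min_lr \<in> range (\<lambda>s. sg True s / sg False s)" unfolding min_lr_def by (intro Min_in) auto
  then show ?thesis using pos by auto
qed

lemma sg_True_le_max_lr: "sg True s \<le> max_lr * sg False s"
proof -
  have "sg True s / sg False s \<le> max_lr" unfolding max_lr_def by (intro Max_ge) auto
  then show ?thesis using pos[of False s] by (simp add: divide_le_eq)
qed

lemma min_lr_le_sg_True: "min_lr * sg False s \<le> sg True s"
proof -
  have "min_lr \<le> sg True s / sg False s" unfolding min_lr_def by (intro Min_le) auto
  then show ?thesis using pos[of False s] by (simp add: le_divide_eq)
qed

lemma min_lr_le_max_lr: "min_lr \<le> max_lr"
proof -
  fix s :: 's
  have "min_lr * sg False s \<le> max_lr * sg False s"
    using min_lr_le_sg_True sg_True_le_max_lr order_trans by blast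
  then show ?thesis using pos[of False s] by simp
qed

lemma gamma_ge1: "gamma sg \<ge> 1"
  unfolding gamma_eq using min_lr_pos min_lr_le_max_lr by simp

lemma max_lr_eq: "max_lr = gamma sg * min_lr"
  unfolding gamma_eq using min_lr_pos by simp

lemma extreme_signals:
  obtains sU sD where "sg True sU / sg False sU = max_lr" and "sg True sD / sg False sD = min_lr"
proof -
  have "max_lr \<in> range (\<lambda>s. sg True s / sg False s)" unfolding max_lr_def by (intro Max_in) auto
  moreover have "min_lr \<in> range (\<lambda>s. sg True s / sg False s)"
    unfolding min_lr_def by (intro Min_in) auto
  ultimately show ?thesis using that by auto
qed

end

section \<open>The Markov chain induced by a protocol\<close>

locale protocol_game = signals sg for sg :: "bool \<Rightarrow> 's::finite \<Rightarrow> real" +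
  fixes m :: nat and P :: "'s protocol"
  assumes proto: "is_protocol m P"
begin

definition trans_prob :: "bool \<Rightarrow> nat \<Rightarrow> nat \<Rightarrow> real" where
  "trans_prob \<theta> i j = (\<Sum>s\<in>UNIV. sg \<theta> s * trans P i s j)"

lemma trans_nonneg: "i \<in> {1..m} \<Longrightarrow> j \<in> {1..m} \<Longrightarrow> 0 \<le> trans P i s j"
  using proto unfolding is_protocol_def by blast

lemma trans_sum: "i \<in> {1..m} \<Longrightarrow> (\<Sum>j=1..m. trans P i s j) = 1"
  using proto unfolding is_protocol_def by blast

lemma init_nonneg: "j \<in> {1..m} \<Longrightarrow> 0 \<le> init P j"
  using proto unfolding is_protocol_def by blast

lemma init_sum: "(\<Sum>j=1..m. init P j) = 1"
  using proto unfolding is_protocol_def by blast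

lemma act_bounds: "i \<in> {1..m} \<Longrightarrow> 0 \<le> act P i \<and> act P i \<le> 1"
  using proto unfolding is_protocol_def by blast

lemma trans_prob_nonneg: "i \<in> {1..m} \<Longrightarrow> j \<in> {1..m} \<Longrightarrow> 0 \<le> trans_prob \<theta> i j"
  unfolding trans_prob_def
    using trans_nonneg pos by (intro sum_nonneg mult_nonneg_nonneg) (auto intro: less_imp_le)

lemma trans_prob_sum: "i \<in> {1..m} \<Longrightarrow> (\<Sum>j=1..m. trans_prob \<theta> i j) = 1"
proof -
  assume i: "i \<in> {1..m}"
  have "(\<Sum>j=1..m. trans_prob \<theta> i j) = (\<Sum>s\<in>UNIV. sg \<theta> s * (\<Sum>j=1..m. trans P i s j))"
    unfolding trans_prob_def by (simp add: sum.swap[of _ UNIV] sum_distrib_left)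
  also have "\<dots> = 1" using trans_sum[OF i] psum by simp
  finally show ?thesis .
qed

lemma trans_prob_pos_iff:
  assumes i: "i \<in> {1..m}" and j: "j \<in> {1..m}"
  shows "trans_prob \<theta> i j > 0 \<longleftrightarrow> (\<exists>s. trans P i s j > 0)"
proof -
  have nn: "0 \<le> sg \<theta> s * trans P i s j" for s
    using trans_nonneg[OF i j] pos by (simp add: less_imp_le)
  have "trans_prob \<theta> i j > 0 \<longleftrightarrow> (\<exists>s\<in>UNIV. 0 < sg \<theta> s * trans P i s j)"
    unfolding trans_prob_def by (rule sum_pos_iff_ex) (use nn in auto)
  also have "\<dots> \<longleftrightarrow> (\<exists>s. trans P i s j > 0)"
  proof -
    have "0 < sg \<theta> s * trans P i s j \<longleftrightarrow> 0 < trans P i s j" for s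
      using pos[of \<theta> s] by (simp add: zero_less_mult_iff)
    then show ?thesis by simp
  qed
  finally show ?thesis .
qed

lemma edge_iff: "edge m P i j \<longleftrightarrow> i \<in> {1..m} \<and> j \<in> {1..m} \<and> trans_prob \<theta> i j > 0"
  unfolding edge_def using trans_prob_pos_iff by blast

lemma step_eq: "step m sg P \<sigma> \<theta> q j =
   (\<Sum>i\<in>{1..m}. if absorbing P i then 0 else q i * (1 - \<sigma> i \<theta>) * trans_prob \<theta> i j)"
  unfolding step_def trans_prob_def by simp

abbreviation mass where "mass \<sigma> \<theta> t \<equiv> alive m sg P \<sigma> \<theta> t"

lemma alive_0: "mass \<sigma> \<theta> 0 = init P" unfolding alive_def by simp

lemma alive_Suc: "mass \<sigma> \<theta> (Suc t) = step m sg P \<sigma> \<theta> (mass \<sigma> \<theta> t)"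
  unfolding alive_def by simp

lemma alive_Suc_eq: "mass \<sigma> \<theta> (Suc t) j =
   (\<Sum>i\<in>{1..m}. if absorbing P i then 0 else mass \<sigma> \<theta> t i * (1 - \<sigma> i \<theta>) * trans_prob \<theta> i j)"
  by (simp add: alive_Suc step_eq)

lemma alive_nonneg: "is_strategy m \<sigma> \<Longrightarrow> j \<in> {1..m} \<Longrightarrow> 0 \<le> mass \<sigma> \<theta> t j"
proof (induction t arbitrary: j)
  case 0 then show ?case by (simp add: alive_0 init_nonneg)
next
  case (Suc t)
  show ?case unfolding alive_Suc_eq
    using Suc trans_prob_nonneg unfolding is_strategy_def
    by (intro sum_nonneg) (auto intro!: mult_nonneg_nonneg)
qed

abbreviation ending where "ending \<sigma> \<theta> t i \<equiv> ends m sg P \<sigma> \<theta> t i"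

lemma ending_nonneg: "is_strategy m \<sigma> \<Longrightarrow> i \<in> {1..m} \<Longrightarrow> 0 \<le> ending \<sigma> \<theta> t i"
proof -
  assume s: "is_strategy m \<sigma>" and i: "i \<in> {1..m}"
  have "0 \<le> \<sigma> i \<theta>" using s i unfolding is_strategy_def by blast
  then show ?thesis unfolding ends_def using alive_nonneg[OF s i, of \<theta> t] by simp
qed

definition total_mass where "total_mass \<sigma> \<theta> t = (\<Sum>j=1..m. mass \<sigma> \<theta> t j)"

lemma total_mass_Suc: "total_mass \<sigma> \<theta> (Suc t) = total_mass \<sigma> \<theta> t - (\<Sum>i=1..m. ending \<sigma> \<theta> t i)"
proof -
  have "total_mass \<sigma> \<theta> (Suc t) = (\<Sum>i\<in>{1..m}. if absorbing P i then 0 else mass \<sigma> \<theta> t i * (1 - \<sigma> i \<theta>)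
      * (\<Sum>j=1..m. trans_prob \<theta> i j))"
    unfolding total_mass_def alive_Suc_eq
      by (subst sum.swap) (auto simp: sum_distrib_left intro!: sum.cong)
  also have "\<dots> = (\<Sum>i\<in>{1..m}. if absorbing P i then 0 else mass \<sigma> \<theta> t i * (1 - \<sigma> i \<theta>))"
    using trans_prob_sum by (auto intro!: sum.cong)
  also have "\<dots> = (\<Sum>i\<in>{1..m}. mass \<sigma> \<theta> t i - ending \<sigma> \<theta> t i)"
    unfolding ends_def by (intro sum.cong) (auto simp: algebra_simps)
  also have "\<dots> = total_mass \<sigma> \<theta> t - (\<Sum>i=1..m. ending \<sigma> \<theta> t i)"
    unfolding total_mass_def by (simp add: sum_subtractf)
  finally show ?thesis .
qed

lemma total_mass_0: "total_mass \<sigma> \<theta> 0 = 1" unfolding total_mass_def alive_0 using init_sum by simp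

lemma total_mass_nonneg: "is_strategy m \<sigma> \<Longrightarrow> 0 \<le> total_mass \<sigma> \<theta> t"
  unfolding total_mass_def using alive_nonneg by (auto intro: sum_nonneg)

lemma ending_partial_sum: "(\<Sum>\<tau><t. \<Sum>i=1..m. ending \<sigma> \<theta> \<tau> i) = 1 - total_mass \<sigma> \<theta> t"
  by (induction t) (auto simp: total_mass_0 total_mass_Suc)

lemma ending_summable: "is_strategy m \<sigma> \<Longrightarrow> summable (\<lambda>t. \<Sum>i=1..m. ending \<sigma> \<theta> t i)"
  and ending_suminf_le1: "is_strategy m \<sigma> \<Longrightarrow> (\<Sum>t. \<Sum>i=1..m. ending \<sigma> \<theta> t i) \<le> 1"
proof -
  assume s: "is_strategy m \<sigma>"
  have nn: "\<And>t. 0 \<le> (\<Sum>i=1..m. ending \<sigma> \<theta> t i)" using ending_nonneg[OF s] by (auto intro: sum_nonneg)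
  have bd: "\<And>t. (\<Sum>\<tau><t. \<Sum>i=1..m. ending \<sigma> \<theta> \<tau> i) \<le> 1"
    using ending_partial_sum total_mass_nonneg[OF s] by simp
  show "summable (\<lambda>t. \<Sum>i=1..m. ending \<sigma> \<theta> t i)"
    by (rule summableI_nonneg_bounded[where x=1]) (use nn bd in auto)
  then show "(\<Sum>t. \<Sum>i=1..m. ending \<sigma> \<theta> t i) \<le> 1"
    by (rule suminf_le_const) (use bd in auto)
qed

lemma ending_weighted_summable:
  assumes s: "is_strategy m \<sigma>" and w: "\<And>i. i \<in> {1..m} \<Longrightarrow> 0 \<le> w i \<and> w i \<le> 1"
  shows "summable (\<lambda>t. \<Sum>i=1..m. ending \<sigma> \<theta> t i * w i)"
proof (rule summable_comparison_test'[OF ending_summable[OF s, of \<theta>]])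
  fix t
  have "0 \<le> (\<Sum>i=1..m. ending \<sigma> \<theta> t i * w i)"
    using ending_nonneg[OF s] w by (intro sum_nonneg mult_nonneg_nonneg) auto
  moreover have "(\<Sum>i=1..m. ending \<sigma> \<theta> t i * w i) \<le> (\<Sum>i=1..m. ending \<sigma> \<theta> t i)"
    using ending_nonneg[OF s] w by (intro sum_mono) (simp add: mult_left_le)
  ultimately show "norm (\<Sum>i=1..m. ending \<sigma> \<theta> t i * w i) \<le> (\<Sum>i=1..m. ending \<sigma> \<theta> t i)" by simp
qed

lemma probH_summable: "is_strategy m \<sigma> \<Longrightarrow> summable (\<lambda>t. \<Sum>i=1..m. ending \<sigma> \<theta> t i * act P i)"
  by (rule ending_weighted_summable) (use act_bounds in auto)

lemma probL_summable: "is_strategy m \<sigma> \<Longrightarrow> summable (\<lambda>t. \<Sum>i=1..m. ending \<sigma> \<theta> t i * (1 - act P i))"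
  by (rule ending_weighted_summable) (use act_bounds in auto)

lemma probH_nonneg: "is_strategy m \<sigma> \<Longrightarrow> 0 \<le> probH m sg P \<sigma> \<theta>"
  unfolding probH_def
  by (rule suminf_nonneg[OF probH_summable])
    (use ending_nonneg act_bounds in \<open>auto intro!: sum_nonneg mult_nonneg_nonneg\<close>)

lemma probL_nonneg: "is_strategy m \<sigma> \<Longrightarrow> 0 \<le> probL m sg P \<sigma> \<theta>"
  unfolding probL_def
  by (rule suminf_nonneg[OF probL_summable])
    (use ending_nonneg act_bounds in \<open>auto intro!: sum_nonneg mult_nonneg_nonneg\<close>)

lemma probHL_sum: "is_strategy m \<sigma> \<Longrightarrow> probH m sg P \<sigma> \<theta> + probL m sg P \<sigma> \<theta> \<le> 1"
proof -
  assume s: "is_strategy m \<sigma>"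
  have "probH m sg P \<sigma> \<theta> + probL m sg P \<sigma> \<theta> =
     (\<Sum>t. (\<Sum>i=1..m. ending \<sigma> \<theta> t i * act P i) + (\<Sum>i=1..m. ending \<sigma> \<theta> t i * (1 - act P i)))"
    unfolding probH_def probL_def
      using suminf_add[OF probH_summable[OF s] probL_summable[OF s]] by simp
  also have "\<dots> = (\<Sum>t. \<Sum>i=1..m. ending \<sigma> \<theta> t i)"
    by (simp add: sum.distrib[symmetric] algebra_simps)
  also have "\<dots> \<le> 1" using ending_suminf_le1[OF s] .
  finally show ?thesis .
qed

lemma probH_le1: "is_strategy m \<sigma> \<Longrightarrow> probH m sg P \<sigma> \<theta> \<le> 1"
  using probHL_sum probL_nonneg by (smt (verit))

lemma probL_le1: "is_strategy m \<sigma> \<Longrightarrow> probL m sg P \<sigma> \<theta> \<le> 1"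
  using probHL_sum probH_nonneg by (smt (verit))

lemma UR_bounds: "is_strategy m \<sigma> \<Longrightarrow> 0 \<le> p \<Longrightarrow> p \<le> 1 \<Longrightarrow> 0 \<le> UR m sg p P \<sigma> \<and> UR m sg p P \<sigma> \<le> 1"
proof -
  assume s: "is_strategy m \<sigma>" and p: "0 \<le> p" "p \<le> 1"
  have a: "0 \<le> probH m sg P \<sigma> True" "probH m sg P \<sigma> True \<le> 1"
    "0 \<le> probL m sg P \<sigma> False" "probL m sg P \<sigma> False \<le> 1"
    using probH_nonneg[OF s] probH_le1[OF s] probL_nonneg[OF s] probL_le1[OF s] by auto
  have "p * probH m sg P \<sigma> True \<le> p" using a p by (simp add: mult_left_le)
  moreover have "(1-p) * probL m sg P \<sigma> False \<le> 1 - p" using a p by (simp add: mult_left_le)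
  ultimately show ?thesis unfolding UR_def
    using a p by (auto intro!: add_nonneg_nonneg mult_nonneg_nonneg)
qed

lemma trans_prob_True_le: "i \<in> {1..m} \<Longrightarrow> j \<in> {1..m}
    \<Longrightarrow> trans_prob True i j \<le> max_lr * trans_prob False i j"
proof -
  assume i: "i \<in> {1..m}" and j: "j \<in> {1..m}"
  have "sg True s * trans P i s j \<le> max_lr * (sg False s * trans P i s j)" for s
    using mult_right_mono[OF sg_True_le_max_lr[of s] trans_nonneg[OF i j, of s]]
      by (simp add: mult.assoc)
  then show ?thesis unfolding trans_prob_def sum_distrib_left by (intro sum_mono)
qed

lemma trans_prob_True_ge: "i \<in> {1..m} \<Longrightarrow> j \<in> {1..m}
    \<Longrightarrow> min_lr * trans_prob False i j \<le> trans_prob True i j"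
proof -
  assume i: "i \<in> {1..m}" and j: "j \<in> {1..m}"
  have "min_lr * (sg False s * trans P i s j) \<le> sg True s * trans P i s j" for s
    using mult_right_mono[OF min_lr_le_sg_True[of s] trans_nonneg[OF i j, of s]]
      by (simp add: mult.assoc)
  then show ?thesis unfolding trans_prob_def sum_distrib_left by (intro sum_mono)
qed

lemma trans_prob_pos_True_iff: "i \<in> {1..m} \<Longrightarrow> j \<in> {1..m}
    \<Longrightarrow> trans_prob True i j > 0 \<longleftrightarrow> trans_prob False i j > 0"
proof -
  assume i: "i \<in> {1..m}" and j: "j \<in> {1..m}"
  show ?thesis
    using trans_prob_pos_iff[OF i j, of True] trans_prob_pos_iff[OF i j, of False] by simp
qed

end

context signals
begin

text \<open>\<open>Sup {}\<close> is the unspecified value that \<open>UR_val\<close> takes when there is no best response.\<close>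

lemma UR_val_le: "is_protocol m P \<Longrightarrow> 0 \<le> p \<Longrightarrow> p \<le> 1 \<Longrightarrow> UR_val m sg p P \<le> max 1 (Sup {})"
proof -
  assume P: "is_protocol m P" and p: "0 \<le> p" "p \<le> 1"
  interpret protocol_game sg m P using P by unfold_locales
  show ?thesis
  proof (cases "br m sg p P = {}")
    case True then show ?thesis unfolding UR_val_def by simp
  next
    case False
    have "Sup {UR m sg p P \<sigma> | \<sigma>. \<sigma> \<in> br m sg p P} \<le> 1"
      using False UR_bounds p unfolding br_def by (intro cSup_least) auto
    then show ?thesis unfolding UR_val_def by simp
  qed
qed

lemma UR_val_le_UR_sup: "is_protocol m P \<Longrightarrow> 0 \<le> p \<Longrightarrow> p \<le> 1 \<Longrightarrow> UR_val m sg p P \<le> UR_sup m sg p"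
  unfolding UR_sup_def using UR_val_le by (intro cSup_upper bdd_aboveI) auto

end

section \<open>Parsimonious protocols\<close>

definition never_stop :: "nat \<Rightarrow> bool \<Rightarrow> real" where "never_stop = (\<lambda>_ _. 0)"

lemma is_strategy_never_stop: "is_strategy m never_stop"
  unfolding is_strategy_def never_stop_def by simp

locale parsimonious_game = protocol_game +
  fixes i0 i1 :: nat
  assumes i0: "i0 \<in> {1..m}" and i1: "i1 \<in> {1..m}" and i0_ne_i1: "i0 \<noteq> i1"
    and absorbing_states: "{i\<in>{1..m}. absorbing P i} = {i0, i1}"
    and act_i0: "act P i0 = 0" and act_i1: "act P i1 = 1"
    and non_absorbing: "\<And>i. i \<in> {1..m} \<Longrightarrow> \<not> absorbing P i \<Longrightarrow> transient m P i \<and> act P i = 0"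
begin

definition T where "T = {1..m} - {i0, i1}"

lemma finite_T: "finite T" unfolding T_def by simp
lemma T_subset: "T \<subseteq> {1..m}" unfolding T_def by auto
lemma absorbing_i0: "absorbing P i0" using absorbing_states i0 by blast
lemma absorbing_i1: "absorbing P i1" using absorbing_states i1 by blast
lemma T_not_absorbing: "i \<in> T \<Longrightarrow> \<not> absorbing P i" using absorbing_states unfolding T_def by blast
lemma T_act: "i \<in> T \<Longrightarrow> act P i = 0" using non_absorbing T_not_absorbing T_subset by blast
lemma i0_notin_T: "i0 \<notin> T" and i1_notin_T: "i1 \<notin> T" unfolding T_def by auto
lemma T_bounds [simp]: "i \<in> T \<Longrightarrow> Suc 0 \<le> i" "i \<in> T \<Longrightarrow> i \<le> m"
  using T_subset by auto
lemma absorbing_state_bounds [simp]: "Suc 0 \<le> i0" "i0 \<le> m" "Suc 0 \<le> i1" "i1 \<le> m"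
  using i0 i1 by auto
lemma states_eq: "{1..m} = insert i0 (insert i1 T)" using i0 i1 unfolding T_def by auto

lemma sum_states: "(\<Sum>i\<in>{1..m}. f i) = f i0 + f i1 + (\<Sum>i\<in>T. f i)"
  using i0_ne_i1 i0_notin_T i1_notin_T finite_T by (subst states_eq) (simp add: add.assoc)

lemma alive_never_stop_Suc: "mass never_stop \<theta> (Suc t) j
    = (\<Sum>i\<in>T. mass never_stop \<theta> t i * trans_prob \<theta> i j)"
  unfolding alive_Suc_eq sum_states using absorbing_i0 absorbing_i1 T_not_absorbing
  by (auto simp: never_stop_def intro!: sum.cong)

lemma alive_le_never_stop:
  assumes \<sigma>: "is_strategy m \<sigma>"
  shows "j \<in> {1..m} \<Longrightarrow> mass \<sigma> \<theta> t j \<le> mass never_stop \<theta> t j"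
proof (induction t arbitrary: j)
  case 0 then show ?case by (simp add: alive_0)
next
  case (Suc t)
  have "mass \<sigma> \<theta> t i * (1 - \<sigma> i \<theta>) * trans_prob \<theta> i j \<le> mass never_stop \<theta> t i * trans_prob \<theta> i j"
    if i: "i \<in> {1..m}" for i
  proof -
    have "mass \<sigma> \<theta> t i * (1 - \<sigma> i \<theta>) \<le> mass \<sigma> \<theta> t i"
      using alive_nonneg[OF \<sigma> i] \<sigma> i unfolding is_strategy_def by (simp add: mult_left_le)
    also have "\<dots> \<le> mass never_stop \<theta> t i" using Suc.IH[OF i] .
    finally show ?thesis using trans_prob_nonneg[OF i Suc.prems] by (rule mult_right_mono)
  qed
  then show ?case unfolding alive_Suc_eq by (auto simp: never_stop_def intro!: sum_mono)
qed

lemma probH_summand: "(\<Sum>i=1..m. ending \<sigma> \<theta> t i * act P i) = mass \<sigma> \<theta> t i1"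
  unfolding sum_states using absorbing_i1 act_i0 act_i1 T_act by (simp add: ends_def)

lemma probL_never_stop_summand: "(\<Sum>i=1..m. ending never_stop \<theta> t i * (1 - act P i))
    = mass never_stop \<theta> t i0"
  unfolding sum_states
    using absorbing_i0 act_i0 act_i1 T_act T_not_absorbing by (simp add: ends_def never_stop_def)

lemma probH_eq: "probH m sg P \<sigma> \<theta> = (\<Sum>t. mass \<sigma> \<theta> t i1)"
  unfolding probH_def probH_summand ..

lemma summable_mass_i1: "is_strategy m \<sigma> \<Longrightarrow> summable (\<lambda>t. mass \<sigma> \<theta> t i1)"
  using probH_summable[of \<sigma> \<theta>] unfolding probH_summand .

lemma probL_never_stop_eq: "probL m sg P never_stop \<theta> = (\<Sum>t. mass never_stop \<theta> t i0)"
  unfolding probL_def probL_never_stop_summand ..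

lemma summable_mass_i0: "summable (\<lambda>t. mass never_stop \<theta> t i0)"
  using probL_summable[OF is_strategy_never_stop, of \<theta>] unfolding probL_never_stop_summand .

lemma probH_mono: "is_strategy m \<sigma> \<Longrightarrow> probH m sg P \<sigma> \<theta> \<le> probH m sg P never_stop \<theta>"
  unfolding probH_eq
  by (rule suminf_le[OF _ summable_mass_i1 summable_mass_i1[OF is_strategy_never_stop]])
    (use alive_le_never_stop i1 in auto)

lemma US_le_never_stop: "is_strategy m \<sigma> \<Longrightarrow> 0 \<le> p \<Longrightarrow> p \<le> 1 \<Longrightarrow> US m sg p P \<sigma> \<le> US m sg p P never_stop"
  unfolding US_def using probH_mono
  by (intro add_mono mult_left_mono) auto

lemma US_val_eq: "0 \<le> p \<Longrightarrow> p \<le> 1 \<Longrightarrow> US_val m sg p P = US m sg p P never_stop"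
  unfolding US_val_def
  by (rule cSup_eq_maximum) (use is_strategy_never_stop US_le_never_stop in auto)

lemma never_stop_br: "0 \<le> p \<Longrightarrow> p \<le> 1 \<Longrightarrow> never_stop \<in> br m sg p P"
  unfolding br_def using is_strategy_never_stop US_val_eq by auto

lemma br_probH_eq: assumes "0 < p" "p < 1" "\<sigma> \<in> br m sg p P"
  shows "probH m sg P \<sigma> \<theta> = probH m sg P never_stop \<theta>"
proof -
  have s: "is_strategy m \<sigma>" and e: "US m sg p P \<sigma> = US m sg p P never_stop"
    using assms US_val_eq unfolding br_def by auto
  have a: "probH m sg P \<sigma> True \<le> probH m sg P never_stop True" "probH m sg P \<sigma> False
      \<le> probH m sg P never_stop False"
    using probH_mono[OF s] by auto
  have "p * probH m sg P \<sigma> True \<le> p * probH m sg P never_stop True"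
    "(1-p) * probH m sg P \<sigma> False \<le> (1-p) * probH m sg P never_stop False"
    using a assms(1,2) by (auto intro: mult_left_mono)
  with e have "p * probH m sg P \<sigma> True = p * probH m sg P never_stop True"
    "(1-p) * probH m sg P \<sigma> False = (1-p) * probH m sg P never_stop False"
    unfolding US_def by linarith+
  then show ?thesis using assms(1,2) by (cases \<theta>) auto
qed

lemma UR_val_bounds: assumes "0 < p" "p < 1"
  shows "UR m sg p P never_stop \<le> UR_val m sg p P"
    and "UR_val m sg p P \<le> p * probH m sg P never_stop True
        + (1 - p) * (1 - probH m sg P never_stop False)"
proof -
  let ?X = "{UR m sg p P \<sigma> | \<sigma>. \<sigma> \<in> br m sg p P}"
  have bd: "\<And>x. x \<in> ?X \<Longrightarrow> x \<le> p * probH m sg P never_stop True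
      + (1 - p) * (1 - probH m sg P never_stop False)"
  proof -
    fix x assume "x \<in> ?X"
    then obtain \<sigma> where x: "x = UR m sg p P \<sigma>" and b: "\<sigma> \<in> br m sg p P" by blast
    have s: "is_strategy m \<sigma>" using b unfolding br_def by auto
    have "probL m sg P \<sigma> False \<le> 1 - probH m sg P \<sigma> False" using probHL_sum[OF s, of False] by simp
    then have "probL m sg P \<sigma> False \<le> 1 - probH m sg P never_stop False"
      using br_probH_eq[OF assms b] by simp
    then show "x \<le> p * probH m sg P never_stop True + (1 - p) * (1 - probH m sg P never_stop False)"
      unfolding x UR_def using br_probH_eq[OF assms b, of True] assms by (simp add: mult_left_mono)
  qed
  have ne: "UR m sg p P never_stop \<in> ?X" using never_stop_br assms by auto
  show "UR m sg p P never_stop \<le> UR_val m sg p P" unfolding UR_val_def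
    by (rule cSup_upper[OF ne], rule bdd_aboveI, rule bd, assumption)
  show "UR_val m sg p P \<le> p * probH m sg P never_stop True
      + (1 - p) * (1 - probH m sg P never_stop False)"
    unfolding UR_val_def by (rule cSup_least) (use ne bd in auto)
qed

lemma step_never_stop: "step m sg P never_stop \<theta> q j = (\<Sum>i\<in>T. q i * trans_prob \<theta> i j)"
  unfolding step_eq sum_states using absorbing_i0 absorbing_i1 T_not_absorbing
  by (auto simp: never_stop_def intro!: sum.cong)

definition step_iter :: "bool \<Rightarrow> nat \<Rightarrow> (nat \<Rightarrow> real) \<Rightarrow> nat \<Rightarrow> real" where
  "step_iter \<theta> n q = (step m sg P never_stop \<theta> ^^ n) q"

lemma step_iter_0: "step_iter \<theta> 0 q = q" unfolding step_iter_def by simp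
lemma step_iter_Suc: "step_iter \<theta> (Suc n) q j = (\<Sum>i\<in>T. step_iter \<theta> n q i * trans_prob \<theta> i j)"
  unfolding step_iter_def by (simp add: step_never_stop)
lemma step_iter_Suc_right: "step_iter \<theta> (Suc n) q = step_iter \<theta> n (step m sg P never_stop \<theta> q)"
  unfolding step_iter_def by (simp add: funpow_Suc_right del: funpow.simps)
lemma step_iter_add: "step_iter \<theta> (a + b) q = step_iter \<theta> a (step_iter \<theta> b q)"
  unfolding step_iter_def by (simp add: funpow_add)
lemma alive_step_iter: "mass never_stop \<theta> t = step_iter \<theta> t (init P)"
  unfolding step_iter_def alive_def ..

definition step_kernel :: "bool \<Rightarrow> nat \<Rightarrow> nat \<Rightarrow> nat \<Rightarrow> real" where
  "step_kernel \<theta> n i = step_iter \<theta> n (\<lambda>j. if j = i then 1 else 0)"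

lemma step_iter_linear: "j \<in> {1..m} \<Longrightarrow> step_iter \<theta> n q j = (\<Sum>i\<in>{1..m}. q i * step_kernel \<theta> n i j)"
proof (induction n arbitrary: j)
  case 0
  have "(\<Sum>i\<in>{1..m}. q i * step_kernel \<theta> 0 i j) = (\<Sum>i\<in>{1..m}. if i = j then q j else 0)"
    unfolding step_kernel_def step_iter_0 by (intro sum.cong) auto
  also have "\<dots> = q j" using 0 by simp
  finally show ?case by (simp add: step_iter_0)
next
  case (Suc n)
  have "step_iter \<theta> (Suc n) q j = (\<Sum>l\<in>T. (\<Sum>i\<in>{1..m}. q i * step_kernel \<theta> n i l) * trans_prob \<theta> l j)"
    unfolding step_iter_Suc using Suc.IH T_subset by (intro sum.cong) auto
  also have "\<dots> = (\<Sum>i\<in>{1..m}. q i * (\<Sum>l\<in>T. step_kernel \<theta> n i l * trans_prob \<theta> l j))"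
    by (simp add: sum_distrib_left sum_distrib_right sum.swap[of _ T] mult.assoc)
  also have "\<dots> = (\<Sum>i\<in>{1..m}. q i * step_kernel \<theta> (Suc n) i j)"
    unfolding step_kernel_def step_iter_Suc ..
  finally show ?case .
qed

lemma step_kernel_Suc: "i \<in> T \<Longrightarrow> j \<in> {1..m} \<Longrightarrow> step_kernel \<theta> (Suc n) i j
    = (\<Sum>l\<in>{1..m}. trans_prob \<theta> i l * step_kernel \<theta> n l j)"
proof -
  assume i: "i \<in> T" and j: "j \<in> {1..m}"
  have "step_kernel \<theta> (Suc n) i j = step_iter \<theta> n (step m sg P never_stop \<theta> (\<lambda>j. if j
      = i then 1 else 0)) j"
    unfolding step_kernel_def step_iter_Suc_right ..
  also have "\<dots> = (\<Sum>l\<in>{1..m}. step m sg P never_stop \<theta> (\<lambda>j. if j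
      = i then 1 else 0) l * step_kernel \<theta> n l j)"
    using step_iter_linear[OF j] .
  also have "\<dots> = (\<Sum>l\<in>{1..m}. trans_prob \<theta> i l * step_kernel \<theta> n l j)"
  proof (rule sum.cong[OF refl])
    fix l
    have "(\<Sum>i'\<in>T. (if i' = i then 1 else 0) * trans_prob \<theta> i' l)
        = (\<Sum>i'\<in>T. if i' = i then trans_prob \<theta> i' l else 0)"
      by (rule sum.cong) auto
    also have "\<dots> = trans_prob \<theta> i l" using i finite_T by (simp add: sum.delta)
    finally show "step m sg P never_stop \<theta> (\<lambda>j. if j = i then 1 else 0) l * step_kernel \<theta> n l j
        = trans_prob \<theta> i l * step_kernel \<theta> n l j"
      unfolding step_never_stop by simp
  qed
  finally show ?thesis .
qed

lemma step_kernel_absorbing: "l \<notin> T \<Longrightarrow> j \<in> T \<Longrightarrow> step_kernel \<theta> n l j = 0"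
proof (cases n)
  case 0 then show "l \<notin> T \<Longrightarrow> j \<in> T \<Longrightarrow> ?thesis" by (auto simp: step_kernel_def step_iter_0)
next
  case (Suc n')
  assume l: "l \<notin> T"
  have "step m sg P never_stop \<theta> (\<lambda>j. if j = l then 1 else 0) = (\<lambda>_. 0)"
  proof (rule ext)
    fix x
    show "step m sg P never_stop \<theta> (\<lambda>j. if j = l then 1 else 0) x = 0"
      unfolding step_never_stop using l by (intro sum.neutral) auto
  qed
  moreover have "step_iter \<theta> n' (\<lambda>_. 0) = (\<lambda>_. 0)"
    by (induction n') (auto simp: step_iter_0 step_iter_Suc)
  ultimately show ?thesis unfolding step_kernel_def Suc step_iter_Suc_right by simp
qed

definition survival :: "bool \<Rightarrow> nat \<Rightarrow> nat \<Rightarrow> real" where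
  "survival \<theta> n i = (\<Sum>j\<in>T. step_kernel \<theta> n i j)"

lemma survival_0: "i \<in> T \<Longrightarrow> survival \<theta> 0 i = 1"
  unfolding survival_def step_kernel_def step_iter_0 using finite_T by simp

lemma survival_absorbing: "l \<notin> T \<Longrightarrow> survival \<theta> n l = 0"
  unfolding survival_def using step_kernel_absorbing by simp

lemma survival_Suc: "i \<in> T \<Longrightarrow> survival \<theta> (Suc n) i = (\<Sum>l\<in>T. trans_prob \<theta> i l * survival \<theta> n l)"
proof -
  assume i: "i \<in> T"
  have "survival \<theta> (Suc n) i = (\<Sum>j\<in>T. \<Sum>l\<in>{1..m}. trans_prob \<theta> i l * step_kernel \<theta> n l j)"
    unfolding survival_def using step_kernel_Suc[OF i] T_subset by (intro sum.cong) auto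
  also have "\<dots> = (\<Sum>l\<in>{1..m}. trans_prob \<theta> i l * survival \<theta> n l)"
    unfolding survival_def by (simp add: sum_distrib_left sum.swap[of _ T])
  also have "\<dots> = (\<Sum>l\<in>T. trans_prob \<theta> i l * survival \<theta> n l)"
    unfolding sum_states using survival_absorbing i0_notin_T i1_notin_T by simp
  finally show ?thesis .
qed

lemma trans_prob_transient_sum: "i \<in> {1..m} \<Longrightarrow> (\<Sum>l\<in>T. trans_prob \<theta> i l)
    = 1 - trans_prob \<theta> i i0 - trans_prob \<theta> i i1"
  using trans_prob_sum[of i \<theta>] unfolding sum_states by simp

lemma trans_prob_transient_le1: "i \<in> {1..m} \<Longrightarrow> (\<Sum>l\<in>T. trans_prob \<theta> i l) \<le> 1"
  using trans_prob_transient_sum trans_prob_nonneg i0 i1 by (smt (verit))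

lemma survival_le1: "survival \<theta> n i \<le> 1"
proof (induction n arbitrary: i)
  case 0 then show ?case using survival_0 survival_absorbing by (cases "i \<in> T") auto
next
  case (Suc n) show ?case
  proof (cases "i \<in> T")
    case True
    have "survival \<theta> (Suc n) i \<le> (\<Sum>l\<in>T. trans_prob \<theta> i l)"
      unfolding survival_Suc[OF True] using Suc.IH trans_prob_nonneg True T_subset
      by (intro sum_mono) (auto intro: mult_left_le)
    also have "\<dots> \<le> 1" using trans_prob_transient_le1 True T_subset by auto
    finally show ?thesis .
  qed (simp add: survival_absorbing)
qed

lemma survival_Suc_le: "survival \<theta> (Suc n) i \<le> survival \<theta> n i"
proof (induction n arbitrary: i)
  case 0 then show ?case using survival_le1 survival_0 survival_absorbing by (cases "i \<in> T") auto
next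
  case (Suc n) show ?case
  proof (cases "i \<in> T")
    case True
    show ?thesis unfolding survival_Suc[OF True] using Suc.IH trans_prob_nonneg True T_subset
      by (intro sum_mono mult_left_mono) auto
  qed (simp add: survival_absorbing)
qed

lemma survival_antimono: "a \<le> b \<Longrightarrow> survival \<theta> b i \<le> survival \<theta> a i"
  using decseq_SucI[of "\<lambda>n. survival \<theta> n i", OF survival_Suc_le] by (simp add: decseq_def)

lemma finite_reachable: "finite {j. (edge m P)\<^sup>*\<^sup>* x j}"
proof -
  have "{j. (edge m P)\<^sup>*\<^sup>* x j} \<subseteq> insert x {1..m}"
  proof
    fix j assume "j \<in> {j. (edge m P)\<^sup>*\<^sup>* x j}"
    then have "(edge m P)\<^sup>*\<^sup>* x j" by simp
    then show "j \<in> insert x {1..m}"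
      by (cases rule: rtranclp.cases) (auto simp: edge_def)
  qed
  then show ?thesis by (rule finite_subset) simp
qed

lemma reachable_closed: "(edge m P)\<^sup>*\<^sup>* x j \<Longrightarrow> x \<in> X \<Longrightarrow> (\<forall>x\<in>X. \<forall>j. edge m P x j \<longrightarrow> j \<in> X) \<Longrightarrow> j \<in> X"
  by (induction rule: rtranclp_induct) auto

lemma no_closed_transient_set:
  assumes X: "X \<subseteq> T" "X \<noteq> {}" and cl: "\<forall>x\<in>X. \<forall>j. edge m P x j \<longrightarrow> j \<in> X"
  shows False
proof -
  let ?R = "\<lambda>x. {j. (edge m P)\<^sup>*\<^sup>* x j}"
  obtain x0 where "x0 \<in> X" using X by blast
  then obtain x where x: "x \<in> X" and mn: "\<And>y. y \<in> X \<Longrightarrow> card (?R x) \<le> card (?R y)"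
    using ex_has_least_nat[of "\<lambda>x. x \<in> X" x0 "\<lambda>x. card (?R x)"] by blast
  have xT: "x \<in> T" using x X by auto
  then have "transient m P x" using non_absorbing T_subset T_not_absorbing by blast
  then obtain j where xj: "(edge m P)\<^sup>*\<^sup>* x j" and jx: "\<not> (edge m P)\<^sup>*\<^sup>* j x"
    unfolding transient_def by blast
  have jX: "j \<in> X" using reachable_closed[OF xj x cl] .
  have sub: "?R j \<subseteq> ?R x" using xj by (auto intro: rtranclp_trans)
  have "x \<in> ?R x" by simp
  moreover have "x \<notin> ?R j" using jx by simp
  ultimately have "?R j \<subset> ?R x" using sub by blast
  then have "card (?R j) < card (?R x)" using finite_reachable by (rule psubset_card_mono[rotated])
  with mn[OF jX] show False by simp
qed

lemma survival_one_closed: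
  assumes xT: "x \<in> T" and x1: "\<forall>n. survival \<theta> n x = 1" and e: "edge m P x j"
  shows "j \<in> T \<and> (\<forall>n. survival \<theta> n j = 1)"
proof (rule ccontr)
  assume j: "\<not> ?thesis"
  have xr: "x \<in> {1..m}" and jr: "j \<in> {1..m}" and qpos: "trans_prob \<theta> x j > 0"
    using e edge_iff by auto
  have "\<exists>n. survival \<theta> (Suc n) x < 1"
  proof (cases "j \<in> T")
    case False
    then have "j = i0 \<or> j = i1" using jr unfolding T_def by auto
    then have "(\<Sum>l\<in>T. trans_prob \<theta> x l) < 1"
      using trans_prob_transient_sum[OF xr, of \<theta>] qpos trans_prob_nonneg[OF xr i0, of \<theta>]
        trans_prob_nonneg[OF xr i1, of \<theta>] by auto
    moreover have "survival \<theta> (Suc 0) x \<le> (\<Sum>l\<in>T. trans_prob \<theta> x l)"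
      unfolding survival_Suc[OF xT] using survival_le1 trans_prob_nonneg xr T_subset
      by (intro sum_mono) (auto intro: mult_left_le)
    ultimately show ?thesis by (blast intro: le_less_trans)
  next
    case True
    then obtain n where "survival \<theta> n j \<noteq> 1" using j by auto
    then have lt: "survival \<theta> n j < 1" using survival_le1[of \<theta> n j] by simp
    have "survival \<theta> (Suc n) x < (\<Sum>l\<in>T. trans_prob \<theta> x l)"
      unfolding survival_Suc[OF xT]
    proof (rule sum_strict_mono_ex1[OF finite_T])
      show "\<forall>l\<in>T. trans_prob \<theta> x l * survival \<theta> n l \<le> trans_prob \<theta> x l"
        using survival_le1 trans_prob_nonneg xr T_subset by (auto intro: mult_left_le)
      show "\<exists>l\<in>T. trans_prob \<theta> x l * survival \<theta> n l < trans_prob \<theta> x l"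
        using True lt qpos by (intro bexI[of _ j]) auto
    qed
    also have "\<dots> \<le> 1" using trans_prob_transient_le1 xr by simp
    finally show ?thesis by blast
  qed
  then show False using x1 by auto
qed

lemma survival_lt1_ex: "i \<in> T \<Longrightarrow> \<exists>n. survival \<theta> n i < 1"
proof (rule ccontr)
  assume iT: "i \<in> T" and nex: "\<not> (\<exists>n. survival \<theta> n i < 1)"
  let ?X = "{i\<in>T. \<forall>n. survival \<theta> n i = 1}"
  have "i \<in> ?X" using iT nex survival_le1[of \<theta> _ i] by (auto simp: not_less intro: antisym)
  moreover have "\<forall>x\<in>?X. \<forall>j. edge m P x j \<longrightarrow> j \<in> ?X" using survival_one_closed by blast
  ultimately show False using no_closed_transient_set[of ?X] by blast
qed

lemma survival_uniform_lt1: "\<exists>N c. N \<ge> 1 \<and> 0 < c \<and> c < 1 \<and> (\<forall>i\<in>T. survival \<theta> N i \<le> c)"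
proof -
  have "\<forall>i\<in>T. \<exists>n. survival \<theta> n i < 1" using survival_lt1_ex by blast
  from bchoice[OF this] obtain f where f: "\<forall>i\<in>T. survival \<theta> (f i) i < 1" by blast
  define N where "N = Suc (\<Sum>i\<in>T. f i)"
  have fN: "f i \<le> N" if i: "i \<in> T" for i
  proof -
    have "f i \<le> (\<Sum>i\<in>T. f i)" using member_le_sum[of i T f] i finite_T by simp
    then show ?thesis unfolding N_def by simp
  qed
  have lt: "survival \<theta> N i < 1" if i: "i \<in> T" for i
  proof -
    have "survival \<theta> N i \<le> survival \<theta> (f i) i" by (rule survival_antimono[OF fN[OF i]])
    moreover have "survival \<theta> (f i) i < 1" using f i by blast
    ultimately show ?thesis by linarith
  qed
  define c where "c = Max (insert (1/2) (survival \<theta> N ` T))"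
  have c1: "c < 1" unfolding c_def using finite_T lt by (subst Max_less_iff) auto
  have "1/2 \<le> c" unfolding c_def using finite_T by (intro Max_ge) auto
  then have c0: "0 < c" by simp
  have "\<forall>i\<in>T. survival \<theta> N i \<le> c" unfolding c_def using finite_T by (auto intro: Max_ge)
  then show ?thesis using c0 c1 by (intro exI[of _ N] exI[of _ c]) (auto simp: N_def)
qed

definition transient_mass where "transient_mass \<theta> t = (\<Sum>j\<in>T. mass never_stop \<theta> t j)"

lemma mass_never_stop_nonneg: "j \<in> {1..m} \<Longrightarrow> 0 \<le> mass never_stop \<theta> t j"
  using alive_nonneg[OF is_strategy_never_stop] .

lemma mass_never_stop_nonneg_transient: "j \<in> T \<Longrightarrow> 0 \<le> mass never_stop \<theta> t j"
  using mass_never_stop_nonneg T_subset by auto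

lemma transient_mass_nonneg: "0 \<le> transient_mass \<theta> t"
  unfolding transient_mass_def using mass_never_stop_nonneg_transient by (auto intro: sum_nonneg)

lemma transient_mass_le1: "transient_mass \<theta> t \<le> 1"
proof -
  have "transient_mass \<theta> t \<le> total_mass never_stop \<theta> t"
    unfolding transient_mass_def total_mass_def sum_states
      using mass_never_stop_nonneg i0 i1 by simp
  also have "\<dots> \<le> 1"
  proof -
    have "0 \<le> (\<Sum>\<tau><t. \<Sum>i=1..m. ending never_stop \<theta> \<tau> i)"
      using ending_nonneg[OF is_strategy_never_stop] by (intro sum_nonneg) auto
    then show ?thesis using ending_partial_sum[of never_stop \<theta> t] by simp
  qed
  finally show ?thesis .
qed

lemma transient_mass_shift: "transient_mass \<theta> (N + t) = (\<Sum>i\<in>T. mass never_stop \<theta> t i * survival \<theta> N i)"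
proof -
  have "mass never_stop \<theta> (N + t) = step_iter \<theta> N (mass never_stop \<theta> t)"
    unfolding alive_step_iter step_iter_add ..
  then have "transient_mass \<theta> (N + t) = (\<Sum>j\<in>T. \<Sum>i\<in>{1..m}. mass never_stop \<theta> t i * step_kernel \<theta> N i j)"
    unfolding transient_mass_def using step_iter_linear T_subset by (auto intro!: sum.cong)
  also have "\<dots> = (\<Sum>i\<in>{1..m}. mass never_stop \<theta> t i * survival \<theta> N i)"
    unfolding survival_def by (simp add: sum_distrib_left sum.swap[of _ T])
  also have "\<dots> = (\<Sum>i\<in>T. mass never_stop \<theta> t i * survival \<theta> N i)"
    unfolding sum_states using survival_absorbing i0_notin_T i1_notin_T by simp
  finally show ?thesis .
qed

lemma transient_mass_summable: "summable (transient_mass \<theta>)"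
proof -
  obtain N c where N: "N \<ge> 1" and c: "0 < c" "c < 1" and svc: "\<forall>i\<in>T. survival \<theta> N i \<le> c"
    using survival_uniform_lt1 by blast
  have contr: "transient_mass \<theta> (N + t) \<le> c * transient_mass \<theta> t" for t
  proof -
    have "transient_mass \<theta> (N + t) \<le> (\<Sum>i\<in>T. mass never_stop \<theta> t i * c)"
      unfolding transient_mass_shift using svc mass_never_stop_nonneg_transient
      by (intro sum_mono mult_left_mono) auto
    also have "\<dots> = c * transient_mass \<theta> t"
      unfolding transient_mass_def by (simp add: sum_distrib_left mult.commute)
    finally show ?thesis .
  qed
  obtain C r where r: "0 < r" "r < 1" and bound: "\<forall>t. transient_mass \<theta> t \<le> C * r ^ t"
    using geometric_bound_of_periodic_contraction[where f="transient_mass \<theta>",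
        OF N c transient_mass_le1 contr]
    by blast
  show ?thesis
  proof (rule summable_comparison_test'[where g="\<lambda>t. C * r ^ t"])
    show "summable (\<lambda>t. C * r ^ t)" using r by (intro summable_mult summable_geometric) auto
    show "norm (transient_mass \<theta> t) \<le> C * r ^ t" for t using bound transient_mass_nonneg by simp
  qed
qed

lemma mass_le_transient_mass: "j \<in> T \<Longrightarrow> mass never_stop \<theta> t j \<le> transient_mass \<theta> t"
  unfolding transient_mass_def
    using mass_never_stop_nonneg_transient finite_T by (intro member_le_sum) auto

lemma summable_mass: "j \<in> {1..m} \<Longrightarrow> summable (\<lambda>t. mass never_stop \<theta> t j)"
proof -
  assume j: "j \<in> {1..m}"
  show ?thesis
  proof (cases "j \<in> T")
    case True
    show ?thesis
    proof (rule summable_comparison_test'[OF transient_mass_summable])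
      show "norm (mass never_stop \<theta> t j) \<le> transient_mass \<theta> t" for t
        using mass_le_transient_mass True mass_never_stop_nonneg_transient by simp
    qed
  next
    case False
    then have "j = i0 \<or> j = i1" using j unfolding T_def by auto
    then show ?thesis using summable_mass_i0 summable_mass_i1[OF is_strategy_never_stop] by auto
  qed
qed

lemma mass_tendsto_0: "j \<in> {1..m} \<Longrightarrow> (\<lambda>t. mass never_stop \<theta> t j) \<longlonglongrightarrow> 0"
  using summable_LIMSEQ_zero[OF summable_mass] .

lemma harmonic_absorption:
  assumes h: "\<forall>i\<in>T. (\<Sum>j\<in>{1..m}. trans_prob \<theta> i j * w j) = w i"
  shows "(\<Sum>t. mass never_stop \<theta> t i1) * w i1 + (\<Sum>t. mass never_stop \<theta> t i0) * w i0
      = (\<Sum>j\<in>{1..m}. init P j * w j)"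
proof -
  define W where "W t = (\<Sum>j\<in>{1..m}. mass never_stop \<theta> t j * w j)" for t
  have WS: "W (Suc t) = W t - (mass never_stop \<theta> t i1 * w i1 + mass never_stop \<theta> t i0 * w i0)" for t
  proof -
    have "W (Suc t) = (\<Sum>j\<in>{1..m}. \<Sum>i\<in>T. mass never_stop \<theta> t i * trans_prob \<theta> i j * w j)"
      unfolding W_def alive_never_stop_Suc by (simp add: sum_distrib_right)
    also have "\<dots> = (\<Sum>i\<in>T. mass never_stop \<theta> t i * (\<Sum>j\<in>{1..m}. trans_prob \<theta> i j * w j))"
      by (subst sum.swap) (simp add: sum_distrib_left mult.assoc)
    also have "\<dots> = (\<Sum>i\<in>T. mass never_stop \<theta> t i * w i)" using h by simp
    also have "\<dots> = W t - (mass never_stop \<theta> t i1 * w i1 + mass never_stop \<theta> t i0 * w i0)"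
      unfolding W_def sum_states by simp
    finally show ?thesis .
  qed
  have part: "(\<Sum>\<tau><t. mass never_stop \<theta> \<tau> i1 * w i1 + mass never_stop \<theta> \<tau> i0 * w i0) = W 0 - W t" for t
    by (induction t) (auto simp: WS)
  have Wlim: "W \<longlonglongrightarrow> 0"
  proof -
    have "(\<lambda>t. \<Sum>j\<in>{1..m}. mass never_stop \<theta> t j * w j) \<longlonglongrightarrow> (\<Sum>j\<in>{1..m}. 0 * w j)"
      by (intro tendsto_sum tendsto_mult mass_tendsto_0 tendsto_const) auto
    then show ?thesis unfolding W_def by simp
  qed
  have "(\<lambda>t. mass never_stop \<theta> t i1 * w i1 + mass never_stop \<theta> t i0 * w i0) sums (W 0 - 0)"
    unfolding sums_def part by (intro tendsto_diff tendsto_const Wlim)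
  then have "(\<Sum>t. mass never_stop \<theta> t i1 * w i1 + mass never_stop \<theta> t i0 * w i0) = W 0"
    by (simp add: sums_iff)
  moreover have "(\<Sum>t. mass never_stop \<theta> t i1 * w i1 + mass never_stop \<theta> t i0 * w i0) =
      (\<Sum>t. mass never_stop \<theta> t i1) * w i1 + (\<Sum>t. mass never_stop \<theta> t i0) * w i0"
    using summable_mass[OF i1] summable_mass[OF i0]
    by (subst suminf_add[symmetric]) (auto intro: summable_mult2 simp: suminf_mult2)
  ultimately show ?thesis unfolding W_def alive_0 by simp
qed

lemma absorption_certain: "probH m sg P never_stop \<theta> + probL m sg P never_stop \<theta> = 1"
proof -
  have "(\<Sum>t. mass never_stop \<theta> t i1) * 1 + (\<Sum>t. mass never_stop \<theta> t i0) * 1 = (\<Sum>j\<in>{1..m}. init P j * 1)"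
    by (rule harmonic_absorption[where w="\<lambda>_. 1"]) (use trans_prob_sum T_subset in auto)
  then show ?thesis unfolding probH_eq probL_never_stop_eq using init_sum by simp
qed

definition occupation where "occupation \<theta> j = (\<Sum>t. mass never_stop \<theta> t j)"

lemma occupation_eq: "j \<in> {1..m} \<Longrightarrow> occupation \<theta> j
    = init P j + (\<Sum>i\<in>T. occupation \<theta> i * trans_prob \<theta> i j)"
proof -
  assume j: "j \<in> {1..m}"
  have "(\<Sum>t. mass never_stop \<theta> (Suc t) j) = occupation \<theta> j - init P j"
    unfolding occupation_def using suminf_split_head[OF summable_mass[OF j]] by (simp add: alive_0)
  moreover have "(\<Sum>t. mass never_stop \<theta> (Suc t) j) = (\<Sum>i\<in>T. occupation \<theta> i * trans_prob \<theta> i j)"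
  proof -
    have "(\<Sum>t. mass never_stop \<theta> (Suc t) j) = (\<Sum>t. \<Sum>i\<in>T. mass never_stop \<theta> t i * trans_prob \<theta> i j)"
      unfolding alive_never_stop_Suc ..
    also have "\<dots> = (\<Sum>i\<in>T. \<Sum>t. mass never_stop \<theta> t i * trans_prob \<theta> i j)"
      by (rule suminf_sum) (use summable_mass T_subset in \<open>auto intro: summable_mult2\<close>)
    also have "\<dots> = (\<Sum>i\<in>T. occupation \<theta> i * trans_prob \<theta> i j)"
      unfolding occupation_def
        by (intro sum.cong refl suminf_mult2[symmetric] summable_mass) (use T_subset in auto)
    finally show ?thesis .
  qed
  ultimately show ?thesis by simp
qed

lemma occupation_nonneg: "j \<in> {1..m} \<Longrightarrow> 0 \<le> occupation \<theta> j"
  unfolding occupation_def using mass_never_stop_nonneg summable_mass by (intro suminf_nonneg) auto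

lemma probH_never_stop_occupation: "probH m sg P never_stop \<theta> = occupation \<theta> i1"
  unfolding probH_eq occupation_def ..
lemma probL_never_stop_occupation: "probL m sg P never_stop \<theta> = occupation \<theta> i0"
  unfolding probL_never_stop_eq occupation_def ..

end
section \<open>Occupation measures and the cross-ratio bound\<close>

context parsimonious_game
begin

lemma mass_pos_True_iff: "j \<in> {1..m} \<Longrightarrow> mass never_stop True t j > 0 \<longleftrightarrow> mass never_stop False t j > 0"
proof (induction t arbitrary: j)
  case 0 then show ?case by (simp add: alive_0)
next
  case (Suc t)
  have eq: "mass never_stop \<theta> (Suc t) j > 0 \<longleftrightarrow> (\<exists>i\<in>T. mass never_stop \<theta> t i
      * trans_prob \<theta> i j > 0)" for \<theta>
    unfolding alive_never_stop_Suc
      using Suc.prems mass_never_stop_nonneg_transient trans_prob_nonneg T_subset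
    by (intro sum_pos_iff_ex finite_T) (auto intro!: mult_nonneg_nonneg)
  have pw: "mass never_stop \<theta> t i * trans_prob \<theta> i j > 0
      \<longleftrightarrow> mass never_stop \<theta> t i > 0 \<and> trans_prob \<theta> i j > 0" if "i \<in> T" for i \<theta>
  proof -
    have a: "0 \<le> mass never_stop \<theta> t i" using mass_never_stop_nonneg_transient[OF that] .
    have q: "0 \<le> trans_prob \<theta> i j" using trans_prob_nonneg[of i j \<theta>] that Suc.prems T_subset by auto
    show ?thesis using a q by (auto simp: zero_less_mult_iff)
  qed
  have pw2: "(mass never_stop True t i > 0 \<and> trans_prob True i j > 0)
      \<longleftrightarrow> (mass never_stop False t i > 0 \<and> trans_prob False i j > 0)"
    if i: "i \<in> T" for i
  proof -
    have ir: "i \<in> {1..m}" using i T_subset by auto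
    show ?thesis using Suc.IH[OF ir] trans_prob_pos_True_iff[OF ir Suc.prems] by simp
  qed
  show ?case unfolding eq using pw pw2 by blast
qed

lemma occupation_pos_True_iff: "j \<in> {1..m} \<Longrightarrow> occupation True j > 0 \<longleftrightarrow> occupation False j > 0"
proof -
  assume j: "j \<in> {1..m}"
  have "occupation \<theta> j > 0 \<longleftrightarrow> (\<exists>t. mass never_stop \<theta> t j > 0)" for \<theta>
    unfolding occupation_def
      using suminf_pos_iff[OF summable_mass[OF j]] mass_never_stop_nonneg[OF j] by blast
  then show ?thesis using mass_pos_True_iff[OF j] by blast
qed

definition visited where "visited = {j\<in>T. occupation False j > 0}"
definition init_transient where "init_transient = (\<Sum>j\<in>T. init P j)"
definition absorb_prob where "absorb_prob \<theta> i = trans_prob \<theta> i i0 + trans_prob \<theta> i i1"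

lemma visited_subset: "visited \<subseteq> T" unfolding visited_def by auto
lemma finite_visited: "finite visited" using visited_subset finite_T finite_subset by blast
lemma visited_range: "j \<in> visited \<Longrightarrow> j \<in> {1..m}" using visited_subset T_subset by auto

lemma occupation_visited_pos: "j \<in> visited \<Longrightarrow> occupation \<theta> j > 0"
  using occupation_pos_True_iff visited_range unfolding visited_def by (cases \<theta>) auto

lemma occupation_unvisited: "j \<in> T \<Longrightarrow> j \<notin> visited \<Longrightarrow> occupation \<theta> j = 0"
proof -
  assume j: "j \<in> T" "j \<notin> visited"
  then have jr: "j \<in> {1..m}" using T_subset by auto
  have "\<not> occupation False j > 0" using j unfolding visited_def by auto
  then have "\<not> occupation \<theta> j > 0" using occupation_pos_True_iff[OF jr] by (cases \<theta>) auto
  then show ?thesis using occupation_nonneg[OF jr, of \<theta>] by simp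
qed

lemma sum_transient_visited: "(\<Sum>i\<in>T. occupation \<theta> i * f i) = (\<Sum>i\<in>visited. occupation \<theta> i * f i)"
  by (rule sum.mono_neutral_right[OF finite_T visited_subset]) (use occupation_unvisited in auto)

lemma absorb_prob_nonneg: "i \<in> {1..m} \<Longrightarrow> 0 \<le> absorb_prob \<theta> i"
  unfolding absorb_prob_def using trans_prob_nonneg i0 i1 by (simp add: add_nonneg_nonneg)

lemma occupation_eq_visited: "j \<in> {1..m} \<Longrightarrow> occupation \<theta> j
    = init P j + (\<Sum>i\<in>visited. occupation \<theta> i * trans_prob \<theta> i j)"
  using occupation_eq sum_transient_visited by simp

lemma init_pos_imp_visited: "j \<in> T \<Longrightarrow> init P j > 0 \<Longrightarrow> j \<in> visited"
proof -
  assume j: "j \<in> T" "init P j > 0"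
  have jr: "j \<in> {1..m}" using j T_subset by auto
  have "0 \<le> (\<Sum>i\<in>visited. occupation False i * trans_prob False i j)"
    using occupation_nonneg trans_prob_nonneg visited_range jr
      by (intro sum_nonneg mult_nonneg_nonneg) auto
  then have "occupation False j > 0" using occupation_eq_visited[OF jr, of False] j by simp
  then show ?thesis using j unfolding visited_def by auto
qed

lemma init_unvisited: "j \<in> T \<Longrightarrow> j \<notin> visited \<Longrightarrow> init P j = 0"
  using init_pos_imp_visited init_nonneg T_subset by (meson antisym not_le subsetD)

lemma trans_prob_pos_imp_visited: "i \<in> visited \<Longrightarrow> j \<in> T \<Longrightarrow> trans_prob \<theta> i j > 0 \<Longrightarrow> j \<in> visited"
proof -
  assume i: "i \<in> visited" and j: "j \<in> T" and q: "trans_prob \<theta> i j > 0"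
  have jr: "j \<in> {1..m}" using j T_subset by auto
  have ir: "i \<in> {1..m}" using i visited_range by auto
  have qF: "trans_prob False i j > 0" using q trans_prob_pos_True_iff[OF ir jr] by (cases \<theta>) auto
  have "occupation False i * trans_prob False i j
      \<le> (\<Sum>i\<in>visited. occupation False i * trans_prob False i j)"
    using member_le_sum[of i visited "\<lambda>i. occupation False i
        * trans_prob False i j"] i finite_visited occupation_nonneg trans_prob_nonneg visited_range jr
    by (auto intro: mult_nonneg_nonneg)
  moreover have "0 < occupation False i * trans_prob False i j"
    using occupation_visited_pos[OF i] qF by simp
  moreover have "0 \<le> init P j" using init_nonneg jr by simp
  ultimately have "occupation False j > 0" using occupation_eq_visited[OF jr, of False] by simp
  then show ?thesis using j unfolding visited_def by auto
qed

lemma trans_prob_unvisited: "i \<in> visited \<Longrightarrow> j \<in> T \<Longrightarrow> j \<notin> visited \<Longrightarrow> trans_prob \<theta> i j = 0"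
  using trans_prob_pos_imp_visited trans_prob_nonneg visited_range T_subset
    by (meson antisym not_le subsetD)

lemma init_transient_visited: "(\<Sum>j\<in>visited. init P j) = init_transient"
  unfolding init_transient_def
    by (rule sum.mono_neutral_left[OF finite_T visited_subset]) (use init_unvisited in auto)

lemma absorbed_flow: "(\<Sum>i\<in>visited. occupation \<theta> i * absorb_prob \<theta> i) = init_transient"
proof -
  have h: "occupation \<theta> i1 + occupation \<theta> i0 = 1"
    using absorption_certain[of \<theta>]
      unfolding probH_never_stop_occupation probL_never_stop_occupation .
  have "(\<Sum>j\<in>{1..m}. init P j) = init P i0 + init P i1 + init_transient"
    unfolding sum_states init_transient_def ..
  then have "init P i0 + init P i1 + init_transient = 1" using init_sum by simp
  moreover have "occupation \<theta> i1 = init P i1 + (\<Sum>i\<in>visited. occupation \<theta> i * trans_prob \<theta> i i1)"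
    using occupation_eq_visited[OF i1] .
  moreover have "occupation \<theta> i0 = init P i0 + (\<Sum>i\<in>visited. occupation \<theta> i * trans_prob \<theta> i i0)"
    using occupation_eq_visited[OF i0] .
  moreover have "(\<Sum>i\<in>visited. occupation \<theta> i * absorb_prob \<theta> i)
      = (\<Sum>i\<in>visited. occupation \<theta> i * trans_prob \<theta> i i0)
        + (\<Sum>i\<in>visited. occupation \<theta> i * trans_prob \<theta> i i1)"
    unfolding absorb_prob_def by (simp add: distrib_left sum.distrib)
  ultimately show ?thesis using h by linarith
qed

lemma trans_prob_visited_sum: "i \<in> visited \<Longrightarrow> (\<Sum>j\<in>visited. trans_prob \<theta> i j) = 1 - absorb_prob \<theta> i"
proof -
  assume i: "i \<in> visited"
  have ir: "i \<in> {1..m}" using i visited_range by auto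
  have "(\<Sum>j\<in>visited. trans_prob \<theta> i j) = (\<Sum>j\<in>T. trans_prob \<theta> i j)"
    by (rule sum.mono_neutral_left[OF finite_T visited_subset]) (use trans_prob_unvisited i in auto)
  then show ?thesis using trans_prob_transient_sum[OF ir] unfolding absorb_prob_def by simp
qed

lemma edge_stays_visited:
  assumes x: "x \<in> visited" and no_abs: "absorb_prob False x = 0" and e: "edge m P x j"
  shows "j \<in> visited"
proof -
  have xr: "x \<in> {1..m}" and jr: "j \<in> {1..m}" and q: "trans_prob False x j > 0"
    using e edge_iff by auto
  have "trans_prob False x i0 = 0" "trans_prob False x i1 = 0"
    using no_abs trans_prob_nonneg[OF xr i0, of False] trans_prob_nonneg[OF xr i1, of False]
    unfolding absorb_prob_def by auto
  then have "j \<in> T" using q jr unfolding T_def by auto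
  then show "j \<in> visited" using trans_prob_pos_imp_visited[OF x _ q] by simp
qed

lemma init_transient_pos: "visited \<noteq> {} \<Longrightarrow> init_transient > 0"
proof (rule ccontr)
  assume ne: "visited \<noteq> {}" and "\<not> init_transient > 0"
  then have "init_transient = 0"
    using init_transient_visited init_nonneg visited_range by (metis sum_nonneg antisym not_le)
  then have "\<forall>i\<in>visited. occupation False i * absorb_prob False i = 0"
    using absorbed_flow[of False] sum_nonneg_eq_0_iff[OF finite_visited, of "\<lambda>i. occupation False i
        * absorb_prob False i"]
      occupation_nonneg absorb_prob_nonneg visited_range by (auto intro: mult_nonneg_nonneg)
  then have "absorb_prob False i = 0" if "i \<in> visited" for i
    using that occupation_visited_pos[OF that, of False] by force
  then have "\<forall>x\<in>visited. \<forall>j. edge m P x j \<longrightarrow> j \<in> visited" using edge_stays_visited by blast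
  then show False using no_closed_transient_set[OF visited_subset ne] by blast
qed

text \<open>
  Restarting the chain from its initial distribution at every absorption gives a chain on the
  visited states whose stationary measures are the occupation measures.
\<close>

definition renew_prob where "renew_prob \<theta> i j
    = trans_prob \<theta> i j + absorb_prob \<theta> i * init P j / init_transient"

lemma renew_prob_nonneg: "i \<in> visited \<Longrightarrow> j \<in> visited \<Longrightarrow> init_transient > 0 \<Longrightarrow> 0 \<le> renew_prob \<theta> i j"
  unfolding renew_prob_def using trans_prob_nonneg absorb_prob_nonneg init_nonneg visited_range
  by (auto intro!: add_nonneg_nonneg divide_nonneg_pos mult_nonneg_nonneg)

lemma renew_prob_True_le: "i \<in> visited \<Longrightarrow> j \<in> visited \<Longrightarrow> init_transient > 0
    \<Longrightarrow> renew_prob True i j \<le> max_lr * renew_prob False i j"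
proof -
  assume i: "i \<in> visited" and j: "j \<in> visited" and c: "init_transient > 0"
  have ir: "i \<in> {1..m}" and jr: "j \<in> {1..m}" using i j visited_range by auto
  have "absorb_prob True i \<le> max_lr * absorb_prob False i" unfolding absorb_prob_def
    using trans_prob_True_le[OF ir i0] trans_prob_True_le[OF ir i1] by (simp add: distrib_left)
  then have "absorb_prob True i * (init P j / init_transient)
      \<le> max_lr * absorb_prob False i * (init P j / init_transient)"
    using init_nonneg[OF jr] c by (intro mult_right_mono) auto
  then show ?thesis unfolding renew_prob_def
    using trans_prob_True_le[OF ir jr] by (simp add: distrib_left mult.assoc)
qed

lemma renew_prob_True_ge: "i \<in> visited \<Longrightarrow> j \<in> visited \<Longrightarrow> init_transient > 0
    \<Longrightarrow> min_lr * renew_prob False i j \<le> renew_prob True i j"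
proof -
  assume i: "i \<in> visited" and j: "j \<in> visited" and c: "init_transient > 0"
  have ir: "i \<in> {1..m}" and jr: "j \<in> {1..m}" using i j visited_range by auto
  have "min_lr * absorb_prob False i \<le> absorb_prob True i" unfolding absorb_prob_def
    using trans_prob_True_ge[OF ir i0] trans_prob_True_ge[OF ir i1] by (simp add: distrib_left)
  then have "min_lr * absorb_prob False i * (init P j / init_transient)
      \<le> absorb_prob True i * (init P j / init_transient)"
    using init_nonneg[OF jr] c by (intro mult_right_mono) auto
  then show ?thesis unfolding renew_prob_def
    using trans_prob_True_ge[OF ir jr] by (simp add: distrib_left mult.assoc)
qed

lemma occupation_renew_stationary: "init_transient > 0 \<Longrightarrow> j \<in> visited
    \<Longrightarrow> occupation \<theta> j = (\<Sum>i\<in>visited. occupation \<theta> i * renew_prob \<theta> i j)"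
proof -
  assume c: "init_transient > 0" and j: "j \<in> visited"
  have "(\<Sum>i\<in>visited. occupation \<theta> i * renew_prob \<theta> i j)
      = (\<Sum>i\<in>visited. occupation \<theta> i * trans_prob \<theta> i j
        + (occupation \<theta> i * absorb_prob \<theta> i) * (init P j / init_transient))"
    unfolding renew_prob_def by (simp add: distrib_left mult.assoc)
  also have "\<dots> = (\<Sum>i\<in>visited. occupation \<theta> i * trans_prob \<theta> i j)
      + (\<Sum>i\<in>visited. occupation \<theta> i * absorb_prob \<theta> i) * (init P j / init_transient)"
    by (simp add: sum.distrib sum_distrib_right sum_divide_distrib)
  also have "\<dots> = (\<Sum>i\<in>visited. occupation \<theta> i * trans_prob \<theta> i j) + init P j"
    unfolding absorbed_flow using c by simp
  finally show ?thesis using occupation_eq_visited[OF visited_range[OF j]] by simp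
qed

lemma renew_prob_sum: "init_transient > 0 \<Longrightarrow> i \<in> visited \<Longrightarrow> (\<Sum>j\<in>visited. renew_prob \<theta> i j) = 1"
proof -
  assume c: "init_transient > 0" and i: "i \<in> visited"
  have "(\<Sum>j\<in>visited. renew_prob \<theta> i j) = (\<Sum>j\<in>visited. trans_prob \<theta> i j)
      + absorb_prob \<theta> i * (\<Sum>j\<in>visited. init P j) / init_transient"
    unfolding renew_prob_def by (simp add: sum.distrib sum_distrib_left sum_divide_distrib)
  also have "\<dots> = 1" unfolding trans_prob_visited_sum[OF i] init_transient_visited using c by simp
  finally show ?thesis .
qed

definition flow where "flow \<theta> X Y = (\<Sum>x\<in>X. occupation \<theta> x * (\<Sum>j\<in>Y. renew_prob \<theta> x j))"

lemma flow_balance: assumes c: "init_transient > 0" and S: "S \<subseteq> visited"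
  shows "flow \<theta> S (visited - S) = flow \<theta> (visited - S) S"
proof -
  have finS: "finite S" using S finite_visited finite_subset by blast
  have AS: "visited = S \<union> (visited - S)" using S by auto
  have "(\<Sum>j\<in>S. occupation \<theta> j) = (\<Sum>j\<in>S. \<Sum>i\<in>visited. occupation \<theta> i * renew_prob \<theta> i j)"
    using occupation_renew_stationary[OF c] S by (intro sum.cong) auto
  also have "\<dots> = (\<Sum>i\<in>visited. occupation \<theta> i * (\<Sum>j\<in>S. renew_prob \<theta> i j))"
    by (subst sum.swap) (simp add: sum_distrib_left)
  also have "\<dots> = (\<Sum>i\<in>S. occupation \<theta> i * (\<Sum>j\<in>S. renew_prob \<theta> i j)) + flow \<theta> (visited - S) S"
    unfolding flow_def by (subst AS) (rule sum.union_disjoint, use finS finite_visited in auto)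
  also have "(\<Sum>i\<in>S. occupation \<theta> i * (\<Sum>j\<in>S. renew_prob \<theta> i j))
      = (\<Sum>i\<in>S. occupation \<theta> i) - flow \<theta> S (visited - S)"
  proof -
    have "(\<Sum>j\<in>S. renew_prob \<theta> i j) = 1 - (\<Sum>j\<in>visited - S. renew_prob \<theta> i j)" if "i \<in> S" for i
    proof -
      have "(\<Sum>j\<in>visited. renew_prob \<theta> i j) = (\<Sum>j\<in>S. renew_prob \<theta> i j)
          + (\<Sum>j\<in>visited - S. renew_prob \<theta> i j)"
        by (subst AS) (rule sum.union_disjoint, use finS finite_visited in auto)
      then show ?thesis using renew_prob_sum[OF c, of i \<theta>] that S by auto
    qed
    then have "(\<Sum>i\<in>S. occupation \<theta> i * (\<Sum>j\<in>S. renew_prob \<theta> i j))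
        = (\<Sum>i\<in>S. occupation \<theta> i - occupation \<theta> i * (\<Sum>j\<in>visited - S. renew_prob \<theta> i j))"
      by (intro sum.cong refl) (simp add: right_diff_distrib)
    then show ?thesis unfolding flow_def by (simp add: sum_subtractf)
  qed
  finally show ?thesis by simp
qed

lemma flow_nonneg: "init_transient > 0 \<Longrightarrow> X \<subseteq> visited \<Longrightarrow> Y \<subseteq> visited \<Longrightarrow> 0 \<le> flow \<theta> X Y"
  unfolding flow_def
proof (intro sum_nonneg mult_nonneg_nonneg)
  fix x j assume c: "init_transient > 0" and X: "X \<subseteq> visited" and Y: "Y \<subseteq> visited"
    and x: "x \<in> X" and j: "j \<in> Y"
  show "0 \<le> renew_prob \<theta> x j" using renew_prob_nonneg[OF _ _ c] X Y x j by blast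
next
  fix x assume "X \<subseteq> visited" "x \<in> X"
  then show "0 \<le> occupation \<theta> x" using occupation_nonneg visited_range by blast
qed

lemma renew_prob_zero_imp_closed:
  assumes c: "init_transient > 0" and X: "X \<subseteq> visited"
    and j0: "j0 \<in> visited - X" "init P j0 > 0"
    and zero: "\<And>x j. x \<in> X \<Longrightarrow> j \<in> visited - X \<Longrightarrow> renew_prob False x j = 0"
  shows "\<forall>x\<in>X. \<forall>j. edge m P x j \<longrightarrow> j \<in> X"
proof (intro ballI allI impI)
  fix x j assume x: "x \<in> X" and e: "edge m P x j"
  have xA: "x \<in> visited" using x X by auto
  have xr: "x \<in> {1..m}" and jr: "j \<in> {1..m}" and q: "trans_prob False x j > 0"
    using e edge_iff by auto
  have j0r: "j0 \<in> {1..m}" using j0 visited_range by auto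
  have "trans_prob False x j0 + absorb_prob False x * init P j0 / init_transient = 0"
    using zero[OF x j0(1)] unfolding renew_prob_def .
  moreover have "0 \<le> trans_prob False x j0" using trans_prob_nonneg[OF xr j0r] .
  moreover have "0 \<le> absorb_prob False x * init P j0 / init_transient"
    using absorb_prob_nonneg[OF xr] j0 c by simp
  ultimately have "absorb_prob False x = 0" using j0 c by (simp add: add_nonneg_eq_0_iff)
  then have jA: "j \<in> visited" using edge_stays_visited[OF xA _ e] by simp
  show "j \<in> X"
  proof (rule ccontr)
    assume "j \<notin> X"
    then have "renew_prob False x j = 0" using zero[OF x] jA by auto
    moreover have "0 \<le> absorb_prob False x * init P j / init_transient"
      using absorb_prob_nonneg[OF xr] init_nonneg[OF jr] c by simp
    ultimately show False using q unfolding renew_prob_def by linarith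
  qed
qed

lemma flow_False_pos:
  assumes c: "init_transient > 0" and X: "X \<subseteq> visited" "X \<noteq> {}"
    and init: "(\<Sum>j\<in>visited - X. init P j) > 0"
  shows "flow False X (visited - X) > 0"
proof (rule ccontr)
  assume "\<not> flow False X (visited - X) > 0"
  then have f0: "flow False X (visited - X) = 0"
    using flow_nonneg[OF c X(1), of "visited - X" False] by auto
  have finX: "finite X" using X finite_visited finite_subset by blast
  have nn: "\<And>x. x \<in> X \<Longrightarrow> 0 \<le> occupation False x * (\<Sum>j\<in>visited - X. renew_prob False x j)"
    using occupation_nonneg visited_range renew_prob_nonneg[OF _ _ c] X(1)
    by (auto intro!: mult_nonneg_nonneg sum_nonneg)
  have zero: "renew_prob False x j = 0" if x: "x \<in> X" and j: "j \<in> visited - X" for x j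
  proof -
    have "occupation False x * (\<Sum>j\<in>visited - X. renew_prob False x j) = 0"
      using f0 sum_nonneg_eq_0_iff[of X "\<lambda>x. occupation False x
          * (\<Sum>j\<in>visited - X. renew_prob False x j)"]
        finX nn x unfolding flow_def by blast
    then have "(\<Sum>j\<in>visited - X. renew_prob False x j) = 0"
      using occupation_visited_pos[of x False] x X(1) by auto
    then show ?thesis
      using sum_nonneg_eq_0_iff[of "visited - X" "renew_prob False x"] finite_visited
        renew_prob_nonneg[OF _ _ c] x X(1) j by auto
  qed
  obtain j0 where j0: "j0 \<in> visited - X" "init P j0 > 0"
    using init sum_pos_iff_ex[of "visited - X" "init P"] finite_visited init_nonneg visited_range
      by auto
  show False
    using no_closed_transient_set[of X] X visited_subset renew_prob_zero_imp_closed[OF c X(1) j0 zero]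
    by blast
qed

definition occupation_ratio where "occupation_ratio j = occupation True j / occupation False j"

lemma occupation_ratio_pos: "j \<in> visited \<Longrightarrow> occupation_ratio j > 0"
  unfolding occupation_ratio_def using occupation_visited_pos by simp

lemma occupation_True_eq: "j \<in> visited \<Longrightarrow> occupation True j = occupation_ratio j * occupation False j"
  unfolding occupation_ratio_def using occupation_visited_pos[of j False] by simp

lemma flow_True_ge:
  assumes c: "init_transient > 0" and X: "X \<subseteq> visited" and Y: "Y \<subseteq> visited"
    and r: "0 \<le> r" "\<And>x. x \<in> X \<Longrightarrow> r \<le> occupation_ratio x"
  shows "min_lr * r * flow False X Y \<le> flow True X Y"
proof -
  have "min_lr * r * flow False X Y
      = (\<Sum>x\<in>X. (r * occupation False x) * (min_lr * (\<Sum>j\<in>Y. renew_prob False x j)))"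
    unfolding flow_def by (simp add: sum_distrib_left algebra_simps)
  also have "\<dots> \<le> flow True X Y"
    unfolding flow_def
  proof (rule sum_mono)
    fix x assume x: "x \<in> X"
    then have xA: "x \<in> visited" using X by auto
    have "r * occupation False x \<le> occupation True x" unfolding occupation_True_eq[OF xA]
      using r(2)[OF x] occupation_nonneg visited_range[OF xA] by (intro mult_right_mono) auto
    moreover have "min_lr * (\<Sum>j\<in>Y. renew_prob False x j) \<le> (\<Sum>j\<in>Y. renew_prob True x j)"
      unfolding sum_distrib_left using renew_prob_True_ge[OF xA _ c] Y by (intro sum_mono) auto
    moreover have "0 \<le> r * occupation False x"
      using r(1) occupation_nonneg visited_range[OF xA] by simp
    moreover have "0 \<le> min_lr * (\<Sum>j\<in>Y. renew_prob False x j)"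
      using min_lr_pos renew_prob_nonneg[OF xA _ c] Y by (intro mult_nonneg_nonneg sum_nonneg) auto
    ultimately show "(r * occupation False x) * (min_lr * (\<Sum>j\<in>Y. renew_prob False x j))
        \<le> occupation True x * (\<Sum>j\<in>Y. renew_prob True x j)"
      by (intro mult_mono) auto
  qed
  finally show ?thesis .
qed

lemma flow_True_le:
  assumes c: "init_transient > 0" and X: "X \<subseteq> visited" and Y: "Y \<subseteq> visited"
    and M: "0 \<le> M" "\<And>x. x \<in> X \<Longrightarrow> occupation_ratio x \<le> M"
  shows "flow True X Y \<le> max_lr * M * flow False X Y"
proof -
  have "flow True X Y \<le> (\<Sum>x\<in>X. (M * occupation False x) * (max_lr * (\<Sum>j\<in>Y. renew_prob False x j)))"
    unfolding flow_def
  proof (rule sum_mono)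
    fix x assume x: "x \<in> X"
    then have xA: "x \<in> visited" using X by auto
    have "occupation True x \<le> M * occupation False x" unfolding occupation_True_eq[OF xA]
      using M(2)[OF x] occupation_nonneg visited_range[OF xA] by (intro mult_right_mono) auto
    moreover have "(\<Sum>j\<in>Y. renew_prob True x j) \<le> max_lr * (\<Sum>j\<in>Y. renew_prob False x j)"
      unfolding sum_distrib_left using renew_prob_True_le[OF xA _ c] Y by (intro sum_mono) auto
    moreover have "0 \<le> occupation True x" using occupation_nonneg visited_range[OF xA] by simp
    moreover have "0 \<le> (\<Sum>j\<in>Y. renew_prob True x j)"
      using renew_prob_nonneg[OF xA _ c] Y by (intro sum_nonneg) auto
    ultimately show "occupation True x * (\<Sum>j\<in>Y. renew_prob True x j)
        \<le> (M * occupation False x) * (max_lr * (\<Sum>j\<in>Y. renew_prob False x j))"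
      using M(1) occupation_nonneg visited_range[OF xA] by (intro mult_mono) auto
  qed
  also have "\<dots> = max_lr * M * flow False X Y"
    unfolding flow_def by (simp add: sum_distrib_left algebra_simps)
  finally show ?thesis .
qed

lemma flow_False_cut_pos:
  assumes S: "S \<subseteq> visited" "S \<noteq> {}" "S \<noteq> visited"
  shows "flow False (visited - S) S > 0"
proof -
  have c: "init_transient > 0" using init_transient_pos S by auto
  have "(\<Sum>j\<in>visited. init P j) = (\<Sum>j\<in>S. init P j) + (\<Sum>j\<in>visited - S. init P j)"
    using S(1) finite_visited by (metis sum.subset_diff add.commute)
  then consider "(\<Sum>j\<in>S. init P j) > 0" | "(\<Sum>j\<in>visited - S. init P j) > 0"
    using init_transient_visited c by linarith
  then show ?thesis
  proof cases
    case 1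
    have "visited - (visited - S) = S" using S by auto
    then show ?thesis using flow_False_pos[OF c Diff_subset, of S] S 1 by auto
  next
    case 2
    then show ?thesis using flow_False_pos[OF c S(1,2)] flow_balance[OF c S(1)] by simp
  qed
qed

text \<open>Flow balance across a cut, combined with the likelihood-ratio bounds on the renewal chain.\<close>

lemma occupation_ratio_cut:
  assumes S: "S \<subseteq> visited" "S \<noteq> {}" "S \<noteq> visited"
  shows "\<exists>x\<in>S. \<exists>y\<in>visited - S. occupation_ratio x \<le> gamma sg * occupation_ratio y"
proof (rule ccontr)
  assume H: "\<not> ?thesis"
  have c: "init_transient > 0" using init_transient_pos S by auto
  have finS: "finite S" and finD: "finite (visited - S)" and D: "visited - S \<noteq> {}"
    using S finite_visited finite_subset by auto
  define r where "r = Min (occupation_ratio ` S)"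
  define M where "M = Max (occupation_ratio ` (visited - S))"
  have "r \<in> occupation_ratio ` S" unfolding r_def using finS S(2) by (intro Min_in) auto
  then obtain x0 where x0: "x0 \<in> S" "occupation_ratio x0 = r" by auto
  have "M \<in> occupation_ratio ` (visited - S)" unfolding M_def using finD D by (intro Max_in) auto
  then obtain y0 where y0: "y0 \<in> visited - S" "occupation_ratio y0 = M" by auto
  have r: "0 \<le> r" "\<And>x. x \<in> S \<Longrightarrow> r \<le> occupation_ratio x"
    using occupation_ratio_pos[of x0] x0 S(1) finS unfolding r_def by force+
  have M: "0 \<le> M" "\<And>y. y \<in> visited - S \<Longrightarrow> occupation_ratio y \<le> M"
    using occupation_ratio_pos[of y0] y0 finD unfolding M_def by force+
  have "min_lr * r * flow False (visited - S) S \<le> max_lr * M * flow False (visited - S) S"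
    using flow_True_ge[OF c S(1) Diff_subset[of visited S] r]
      flow_True_le[OF c Diff_subset[of visited S] S(1) M]
      flow_balance[OF c S(1), of True] flow_balance[OF c S(1), of False] by simp
  then have "(min_lr * r) * flow False (visited - S) S
      \<le> (min_lr * (gamma sg * M)) * flow False (visited - S) S"
    unfolding max_lr_eq by (simp add: algebra_simps)
  then have "min_lr * r \<le> min_lr * (gamma sg * M)"
    using flow_False_cut_pos[OF S] by (rule mult_right_le_imp_le)
  then have "r \<le> gamma sg * M" using min_lr_pos by simp
  then show False using H x0 y0 by auto
qed

lemma card_T: "card T = m - 2"
proof -
  have "card T = card {1..m} - card {i0, i1}"
    unfolding T_def using i0 i1 by (intro card_Diff_subset) auto
  then show ?thesis using i0_ne_i1 by simp
qed

lemma occupation_ratio_spread: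
  assumes x: "x \<in> visited" and y: "y \<in> visited"
  shows "occupation_ratio x \<le> gamma sg ^ (m - 3) * occupation_ratio y"
proof -
  have "occupation_ratio x \<le> gamma sg ^ (card visited - 1) * occupation_ratio y"
    using le_power_card_of_cuts[OF finite_visited gamma_ge1 _ occupation_ratio_cut x y]
      occupation_ratio_pos by auto
  also have "\<dots> \<le> gamma sg ^ (m - 3) * occupation_ratio y"
    using card_mono[OF finite_T visited_subset] card_T gamma_ge1 occupation_ratio_pos[OF y]
    by (intro mult_right_mono power_increasing) auto
  finally show ?thesis .
qed

definition absorption_flow :: "bool \<Rightarrow> nat \<Rightarrow> real" where
  "absorption_flow \<theta> j = (\<Sum>i\<in>visited. occupation \<theta> i * trans_prob \<theta> i j)"

lemma absorption_flow_nonneg: "j \<in> {1..m} \<Longrightarrow> 0 \<le> absorption_flow \<theta> j"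
  unfolding absorption_flow_def using occupation_nonneg trans_prob_nonneg visited_range
  by (intro sum_nonneg mult_nonneg_nonneg) auto

lemma absorption_flow_sum: "absorption_flow \<theta> i1 + absorption_flow \<theta> i0 = init_transient"
  using absorbed_flow[of \<theta>] unfolding absorb_prob_def absorption_flow_def
  by (simp add: distrib_left sum.distrib)

lemma probH_never_stop_eq: "probH m sg P never_stop \<theta> = init P i1 + absorption_flow \<theta> i1"
  unfolding probH_never_stop_occupation absorption_flow_def using occupation_eq_visited[OF i1] .

lemma one_minus_probH_never_stop_eq: "1 - probH m sg P never_stop \<theta> = init P i0 + absorption_flow \<theta> i0"
  using absorption_certain[of \<theta>] occupation_eq_visited[OF i0]
  unfolding probL_never_stop_occupation absorption_flow_def by simp

lemma absorption_flow_True_le: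
  assumes j: "j \<in> {1..m}" and M: "0 \<le> M" "\<And>i. i \<in> visited \<Longrightarrow> occupation_ratio i \<le> M"
  shows "absorption_flow True j \<le> max_lr * M * absorption_flow False j"
  unfolding absorption_flow_def sum_distrib_left
proof (rule sum_mono)
  fix i assume i: "i \<in> visited"
  have ir: "i \<in> {1..m}" using visited_range[OF i] .
  have "occupation True i \<le> M * occupation False i" unfolding occupation_True_eq[OF i]
    using M(2)[OF i] occupation_nonneg[OF ir] by (intro mult_right_mono) auto
  moreover have "trans_prob True i j \<le> max_lr * trans_prob False i j"
    using trans_prob_True_le[OF ir j] .
  moreover have "0 \<le> occupation True i" "0 \<le> trans_prob True i j"
    using occupation_nonneg[OF ir] trans_prob_nonneg[OF ir j] by auto
  ultimately have "occupation True i * trans_prob True i j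
      \<le> (M * occupation False i) * (max_lr * trans_prob False i j)"
    using M(1) occupation_nonneg[OF ir] by (intro mult_mono) auto
  then show "occupation True i * trans_prob True i j
      \<le> max_lr * M * (occupation False i * trans_prob False i j)"
    by (simp add: algebra_simps)
qed

lemma absorption_flow_True_ge:
  assumes j: "j \<in> {1..m}" and r: "0 \<le> r" "\<And>i. i \<in> visited \<Longrightarrow> r \<le> occupation_ratio i"
  shows "min_lr * r * absorption_flow False j \<le> absorption_flow True j"
  unfolding absorption_flow_def sum_distrib_left
proof (rule sum_mono)
  fix i assume i: "i \<in> visited"
  have ir: "i \<in> {1..m}" using visited_range[OF i] .
  have "r * occupation False i \<le> occupation True i" unfolding occupation_True_eq[OF i]
    using r(2)[OF i] occupation_nonneg[OF ir] by (intro mult_right_mono) auto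
  moreover have "min_lr * trans_prob False i j \<le> trans_prob True i j"
    using trans_prob_True_ge[OF ir j] .
  moreover have "0 \<le> r * occupation False i" "0 \<le> min_lr * trans_prob False i j"
    using r(1) occupation_nonneg[OF ir] min_lr_pos trans_prob_nonneg[OF ir j] by auto
  ultimately have "(r * occupation False i) * (min_lr * trans_prob False i j)
      \<le> occupation True i * trans_prob True i j"
    using occupation_nonneg[OF ir] by (intro mult_mono) auto
  then show "min_lr * r * (occupation False i * trans_prob False i j)
      \<le> occupation True i * trans_prob True i j"
    by (simp add: algebra_simps)
qed

lemma absorption_flow_cross_ratio:
  "absorption_flow True i1 * absorption_flow False i0
    \<le> gamma sg ^ (m - 2) * (absorption_flow False i1 * absorption_flow True i0)"
proof (cases "visited = {}")
  case True then show ?thesis unfolding absorption_flow_def by simp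
next
  case False
  define rM where "rM = Max (occupation_ratio ` visited)"
  define rm where "rm = Min (occupation_ratio ` visited)"
  have "rM \<in> occupation_ratio ` visited" unfolding rM_def
    using finite_visited False by (intro Max_in) auto
  then obtain xM where xM: "xM \<in> visited" "occupation_ratio xM = rM" by auto
  have "rm \<in> occupation_ratio ` visited" unfolding rm_def
    using finite_visited False by (intro Min_in) auto
  then obtain xm where xm: "xm \<in> visited" "occupation_ratio xm = rm" by auto
  have rM: "0 \<le> rM" "\<And>i. i \<in> visited \<Longrightarrow> occupation_ratio i \<le> rM"
    using occupation_ratio_pos[OF xM(1)] xM finite_visited unfolding rM_def by force+
  have rm: "0 \<le> rm" "\<And>i. i \<in> visited \<Longrightarrow> rm \<le> occupation_ratio i"
    using occupation_ratio_pos[OF xm(1)] xm finite_visited unfolding rm_def by force+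
  have pos: "0 < min_lr * rm" using occupation_ratio_pos xm min_lr_pos by force
  have "0 < card visited" using False finite_visited by (simp add: card_gt_0_iff)
  then have m3: "m - 2 = Suc (m - 3)" using card_T card_mono[OF finite_T visited_subset] by linarith
  let ?aT = "absorption_flow True i1" and ?aF = "absorption_flow False i1"
  let ?bT = "absorption_flow True i0" and ?bF = "absorption_flow False i0"
  have nn: "0 \<le> ?aT" "0 \<le> ?aF" "0 \<le> ?bT" "0 \<le> ?bF"
    using absorption_flow_nonneg i0 i1 by auto
  have "max_lr * rM \<le> (gamma sg * min_lr) * (gamma sg ^ (m - 3) * rm)"
    unfolding max_lr_eq using occupation_ratio_spread[OF xM(1) xm(1)] xM xm gamma_ge1 min_lr_pos
    by (intro mult_left_mono) auto
  also have "\<dots> = gamma sg ^ (m - 2) * (min_lr * rm)" unfolding m3 by simp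
  finally have ratio: "max_lr * rM \<le> gamma sg ^ (m - 2) * (min_lr * rm)" .
  have "?aT * ?bF * (min_lr * rm) \<le> (max_lr * rM * ?aF) * (?bF * (min_lr * rm))"
    using mult_right_mono[OF absorption_flow_True_le[OF i1 rM], of "?bF * (min_lr * rm)"] nn pos
    by (simp add: mult.assoc)
  also have "\<dots> \<le> (max_lr * rM * ?aF) * ?bT"
    using absorption_flow_True_ge[OF i0 rm] nn rM(1) max_lr_eq min_lr_pos gamma_ge1
    by (intro mult_left_mono) (auto simp: algebra_simps)
  also have "\<dots> \<le> (gamma sg ^ (m - 2) * (?aF * ?bT)) * (min_lr * rm)"
    using mult_right_mono[OF ratio, of "?aF * ?bT"] nn by (simp add: ac_simps)
  finally show ?thesis using pos by (rule mult_right_le_imp_le)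
qed

theorem cross_ratio_bound:
  "probH m sg P never_stop True * (1 - probH m sg P never_stop False)
    \<le> gamma sg ^ (m - 2) * (probH m sg P never_stop False * (1 - probH m sg P never_stop True))"
proof -
  have "(init P i1 + absorption_flow True i1) * (init P i0 + absorption_flow False i0)
      \<le> gamma sg ^ (m - 2) * ((init P i1 + absorption_flow False i1) * (init P i0
        + absorption_flow True i0))"
    by (rule mixture_cross_ratio_le[OF _ _ _ _ _ _ _ absorption_flow_sum absorption_flow_sum
          absorption_flow_cross_ratio]) (use gamma_ge1 init_nonneg i0 i1 absorption_flow_nonneg in auto)
  then show ?thesis
    by (simp only: one_minus_probH_never_stop_eq[symmetric] probH_never_stop_eq[symmetric])
qed

end

section \<open>Protocols approaching the frontier\<close>

lemma rtranclp_edge_only_self: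
  assumes "\<And>j. edge m P a j \<Longrightarrow> j = a" "(edge m P)\<^sup>*\<^sup>* a j"
  shows "j = a"
  using assms(2) by (induction rule: rtranclp_induct) (auto dest: assms(1))

lemma sum_indicator_mult: "(a::nat) \<in> {1..m} \<Longrightarrow> (\<Sum>j\<in>{1..m}. (if j = a then 1 else 0) * w j)
    = (w a :: real)"
proof -
  assume a: "a \<in> {1..m}"
  have "(\<Sum>j\<in>{1..m}. (if j = a then 1 else 0) * w j) = (\<Sum>j\<in>{1..m}. if j = a then w a else 0)"
    by (rule sum.cong) auto
  also have "\<dots> = w a" using a by (simp add: sum.delta)
  finally show ?thesis .
qed

lemma sum_two_point_mult:
  assumes "(a::nat) \<noteq> b" "a \<in> {1..m}" "b \<in> {1..m}"
  shows "(\<Sum>j\<in>{1..m}. (if j = a then u else if j = b then v else 0) * w j) = u * w a + v * (w b :: real)"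
proof -
  have "(\<Sum>j\<in>{1..m}. (if j = a then u else if j = b then v else 0) * w j)
      = (\<Sum>j\<in>{1..m}. (if j = a then u * w a else 0) + (if j = b then v * w b else 0))"
    using assms(1) by (intro sum.cong) auto
  also have "\<dots> = u * w a + v * w b" using assms by (simp add: sum.distrib sum.delta)
  finally show ?thesis .
qed

context signals
begin

lemma parsimonious_game_of_parsimonious:
  assumes pars: "parsimonious m P"
  shows "\<exists>i0 i1. parsimonious_game sg m P i0 i1"
proof -
  have pr: "is_protocol m P" using pars unfolding parsimonious_def by blast
  obtain i0 i1 where ii: "i0 \<in> {1..m}" "i1 \<in> {1..m}" "i0 \<noteq> i1"
    "{i\<in>{1..m}. absorbing P i} = {i0, i1}" "act P i0 = 0" "act P i1 = 1"
    using pars unfolding parsimonious_def by blast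
  have na: "\<And>i. i \<in> {1..m} \<Longrightarrow> \<not> absorbing P i \<Longrightarrow> transient m P i \<and> act P i = 0"
    using pars unfolding parsimonious_def by blast
  have "parsimonious_game sg m P i0 i1"
    using pr pos psum ii na by unfold_locales auto
  then show ?thesis by blast
qed

lemma parsimonious_game_imp_is_protocol: "parsimonious_game sg m P i0 i1 \<Longrightarrow> is_protocol m P"
  unfolding parsimonious_game_def protocol_game_def protocol_game_axioms_def by blast

lemma parsimonious_payoffs:
  assumes game: "parsimonious_game sg m P i0 i1" and p: "0 < p" "p < 1"
  shows "UR_val m sg p P = p * probH m sg P never_stop True
      + (1 - p) * (1 - probH m sg P never_stop False)"
    and "US_val m sg p P = p * probH m sg P never_stop True + (1 - p) * probH m sg P never_stop False"
    and "0 \<le> probH m sg P never_stop \<theta>" and "probH m sg P never_stop \<theta> \<le> 1"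
    and "probH m sg P never_stop True * (1 - probH m sg P never_stop False)
         \<le> gamma sg ^ (m - 2) * (probH m sg P never_stop False * (1 - probH m sg P never_stop True))"
proof -
  interpret parsimonious_game sg m P i0 i1 by (rule game)
  define x where "x = probH m sg P never_stop True"
  define y where "y = probH m sg P never_stop False"
  have L: "probL m sg P never_stop False = 1 - y" unfolding y_def
    using absorption_certain[of False] by simp
  have UR0: "UR m sg p P never_stop = p * x + (1 - p) * (1 - y)" unfolding UR_def x_def L ..
  show "UR_val m sg p P = p * probH m sg P never_stop True
      + (1 - p) * (1 - probH m sg P never_stop False)"
    using UR_val_bounds[OF p] UR0 unfolding x_def y_def by (simp add: antisym)
  show "US_val m sg p P = p * probH m sg P never_stop True + (1 - p) * probH m sg P never_stop False"
    using US_val_eq p unfolding US_def by simp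
  show "0 \<le> probH m sg P never_stop \<theta>" "probH m sg P never_stop \<theta> \<le> 1"
    using probH_nonneg[OF is_strategy_never_stop] probH_le1[OF is_strategy_never_stop] by auto
  show "probH m sg P never_stop True * (1 - probH m sg P never_stop False)
         \<le> gamma sg ^ (m - 2) * (probH m sg P never_stop False * (1 - probH m sg P never_stop True))"
    by (rule cross_ratio_bound)
qed

lemma probH_probL_harmonic:
  assumes game: "parsimonious_game sg m P i0 i1"
    and h: "\<And>i. i \<in> {1..m} \<Longrightarrow> \<not> absorbing P i \<Longrightarrow>
        (\<Sum>j\<in>{1..m}. (\<Sum>s\<in>UNIV. sg \<theta> s * trans P i s j) * w j) = w i"
  shows "probH m sg P never_stop \<theta> * w i1 + probL m sg P never_stop \<theta> * w i0
      = (\<Sum>j\<in>{1..m}. init P j * w j)"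
proof -
  interpret parsimonious_game sg m P i0 i1 by (rule game)
  have "\<forall>i\<in>T. (\<Sum>j\<in>{1..m}. trans_prob \<theta> i j * w j) = w i"
    using h T_subset T_not_absorbing unfolding trans_prob_def by blast
  from harmonic_absorption[OF this] show ?thesis unfolding probH_eq probL_never_stop_eq .
qed

definition constant_protocol :: "nat \<Rightarrow> 's protocol" where
  "constant_protocol a = \<lparr>trans = (\<lambda>i s j. if i
      \<le> 2 then (if j = i then 1 else 0) else (if j = 1 then 1 else 0)),
            init = (\<lambda>j. if j = a then 1 else 0), act = (\<lambda>j. if j = 2 then 1 else 0)\<rparr>"

lemma parsimonious_game_constant_protocol:
  assumes m: "m \<ge> 2" and a: "a \<in> {1..m}"
  shows "parsimonious_game sg m (constant_protocol a :: 's protocol) 1 2"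
proof -
  let ?P = "constant_protocol a :: 's protocol"
  have tr: "trans ?P i s j = (if i \<le> 2 then (if j = i then 1 else 0) else (if j
      = 1 then 1 else 0))" for i s j
    unfolding constant_protocol_def by simp
  have ind: "(\<Sum>j=1..m. if j = b then (1::real) else 0) = 1" if "b \<in> {1..m}" for b
    using that by (simp add: sum.delta)
  have row: "(\<Sum>j=1..m. trans ?P i s j) = 1" if "i \<in> {1..m}" for i s
  proof (cases "i \<le> 2")
    case True then show ?thesis unfolding tr using ind[OF that] by simp
  next
    case False then show ?thesis unfolding tr using ind[of 1] m by simp
  qed
  have proto: "is_protocol m ?P"
    unfolding is_protocol_def using row ind[OF a] by (auto simp: tr constant_protocol_def)
  have absi: "absorbing ?P i \<longleftrightarrow> i \<le> 2" if "i \<ge> 1" for i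
    unfolding absorbing_def tr using that by auto
  have absorbing_states: "{i\<in>{1..m}. absorbing ?P i} = {1, 2}" using m absi by auto
  have e1: "j = 1" if "edge m ?P 1 j" for j
    using that unfolding edge_def tr by (auto split: if_splits)
  have na: "transient m ?P i \<and> act ?P i = 0" if i: "i \<in> {1..m}" "\<not> absorbing ?P i" for i
  proof -
    have i3: "i > 2" using i absi by auto
    have "edge m ?P i 1" unfolding edge_def tr using i3 i m by auto
    moreover have "\<not> (edge m ?P)\<^sup>*\<^sup>* 1 i" using rtranclp_edge_only_self[of m ?P 1 i] e1 i3 by auto
    ultimately have "transient m ?P i" unfolding transient_def by blast
    then show ?thesis using i3 by (simp add: constant_protocol_def)
  qed
  show ?thesis
    by unfold_locales (use proto pos psum m absorbing_states na in \<open>auto simp: constant_protocol_def\<close>)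
qed

lemma probH_constant_protocol:
  assumes m: "m \<ge> 2" and a: "a \<in> {1..m}"
  shows "probH m sg (constant_protocol a :: 's protocol) never_stop \<theta> = (if a = 2 then 1 else 0)"
proof -
  let ?P = "constant_protocol a :: 's protocol"
  have game: "parsimonious_game sg m ?P 1 2" by (rule parsimonious_game_constant_protocol[OF m a])
  have absi: "absorbing ?P i \<longleftrightarrow> i \<le> 2" if "i \<ge> 1" for i
    unfolding absorbing_def constant_protocol_def using that by auto
  have "probH m sg ?P never_stop \<theta> * (if (2::nat)
      = 2 then 1 else 0) + probL m sg ?P never_stop \<theta> * (if (1::nat) = 2 then 1 else 0)
      = (\<Sum>j\<in>{1..m}. init ?P j * (if j = 2 then 1 else 0))"
  proof (rule probH_probL_harmonic[OF game])
    fix i assume i: "i \<in> {1..m}" "\<not> absorbing ?P i"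
    then have i3: "i > 2" using absi by auto
    show "(\<Sum>j\<in>{1..m}. (\<Sum>s\<in>UNIV. sg \<theta> s * trans ?P i s j) * (if j = 2 then 1 else 0))
        = (if i = 2 then 1 else 0)"
      using i3 by (simp add: constant_protocol_def, intro sum.neutral) auto
  qed
  moreover have "(\<Sum>j\<in>{1..m}. init ?P j * (if j = 2 then 1 else 0)) = (if a = 2 then 1 else 0)"
    unfolding constant_protocol_def
      using sum_indicator_mult[OF a, of "\<lambda>j. if j = 2 then 1 else 0"] by simp
  ultimately show ?thesis by simp
qed

lemma prior_le_UR_sup:
  assumes m: "m \<ge> 2" and p: "0 < p" "p < 1"
  shows "p \<le> UR_sup m sg p" and "1 - p \<le> UR_sup m sg p"
proof -
  have "UR_val m sg p (constant_protocol a :: 's protocol) = (if a = 2 then p else 1 - p)"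
    if a: "a \<in> {1..m}" for a
    using parsimonious_payoffs(1)[OF parsimonious_game_constant_protocol[OF m a] p]
      probH_constant_protocol[OF m a] by simp
  moreover have "UR_val m sg p (constant_protocol a :: 's protocol) \<le> UR_sup m sg p"
    if a: "a \<in> {1..m}" for a
    using p
      by (intro UR_val_le_UR_sup parsimonious_game_imp_is_protocol[of _ _ 1 2]
          parsimonious_game_constant_protocol[OF m a]) auto
  ultimately have "(if a = 2 then p else 1 - p) \<le> UR_sup m sg p" if "a \<in> {1..m}" for a
    using that by metis
  from this[of 2] this[of 1] m show "p \<le> UR_sup m sg p" and "1 - p \<le> UR_sup m sg p" by auto
qed

definition ladder_trans :: "nat \<Rightarrow> real \<Rightarrow> real \<Rightarrow> 's \<Rightarrow> 's \<Rightarrow> nat \<Rightarrow> 's \<Rightarrow> nat \<Rightarrow> real" where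
  "ladder_trans m x y sU sD i s j =
    (if i \<le> 2 then (if j = i then 1 else 0)
     else if s = sU then (if i < m then (if j = i + 1 then 1 else 0)
                          else (if j = 2 then x else if j = i then 1 - x else 0))
     else if s = sD then (if 3 < i then (if j = i - 1 then 1 else 0)
                          else (if j = 1 then y else if j = i then 1 - y else 0))
     else (if j = i then 1 else 0))"

definition ladder :: "nat \<Rightarrow> real \<Rightarrow> real \<Rightarrow> 's \<Rightarrow> 's \<Rightarrow> 's protocol" where
  "ladder m x y sU sD = \<lparr>trans = ladder_trans m x y sU sD, init = (\<lambda>j. if j = 3 then 1 else 0),
                    act = (\<lambda>j. if j = 2 then 1 else 0)\<rparr>"

lemma ladder_trans_expectation:
  assumes m: "m \<ge> 3" and i: "i \<in> {1..m}" and UD: "sU \<noteq> sD"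
  shows "(\<Sum>j\<in>{1..m}. ladder_trans m x y sU sD i s j * w j) =
    (if i \<le> 2 then w i
     else if s = sU then (if i < m then w (i + 1) else x * w 2 + (1 - x) * w i)
     else if s = sD then (if 3 < i then w (i - 1) else y * w 1 + (1 - y) * w i)
     else w i)"
proof -
  have d: "(\<Sum>j\<in>{1..m}. (if j = a then 1 else 0) * w j) = w a" if "a \<in> {1..m}" for a
    using sum_indicator_mult[OF that] .
  consider "i \<le> 2" | "\<not> i \<le> 2" "s = sU" "i < m" | "\<not> i \<le> 2" "s = sU" "\<not> i < m"
    | "\<not> i \<le> 2" "s = sD" "3 < i" | "\<not> i \<le> 2" "s = sD" "\<not> 3 < i"
    | "\<not> i \<le> 2" "s \<noteq> sU" "s \<noteq> sD" by blast
  then show ?thesis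
  proof cases
    case 1 then show ?thesis unfolding ladder_trans_def using d[OF i] by simp
  next
    case 2
    have "i + 1 \<in> {1..m}" using 2 i by auto
    then show ?thesis unfolding ladder_trans_def using 2 d[of "i+1"] by simp
  next
    case 3
    have "i \<noteq> 2" "i \<in> {1..m}" "(2::nat) \<in> {1..m}" using 3 i m by auto
    then show ?thesis unfolding ladder_trans_def
      using 3 sum_two_point_mult[of 2 i m x "1 - x" w] by simp
  next
    case 4
    have "i - 1 \<in> {1..m}" using 4 i by auto
    then show ?thesis unfolding ladder_trans_def using 4 UD d[of "i-1"] by simp
  next
    case 5
    have "i \<noteq> 1" "(1::nat) \<in> {1..m}" using 5 i m by auto
    then show ?thesis unfolding ladder_trans_def
      using 5 UD i sum_two_point_mult[of 1 i m y "1 - y" w] by simp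
  next
    case 6 then show ?thesis unfolding ladder_trans_def using d[OF i] by simp
  qed
qed

lemma ladder_trans_sum:
  assumes m: "m \<ge> 3" and i: "i \<in> {1..m}" and UD: "sU \<noteq> sD"
  shows "(\<Sum>j=1..m. ladder_trans m x y sU sD i s j) = 1"
  using ladder_trans_expectation[OF m i UD, of x y s "\<lambda>_. 1"] by (simp add: algebra_simps)

lemma ladder_reaches_top:
  assumes m: "m \<ge> 3" and x: "0 < x" and i: "3 \<le> i" "i \<le> m"
  shows "(edge m (ladder m x y sU sD))\<^sup>*\<^sup>* i m"
  using i
proof (induction "m - i" arbitrary: i)
  case 0 then show ?case by simp
next
  case (Suc k)
  then have im: "i < m" by simp
  have "edge m (ladder m x y sU sD) i (i + 1)"
    unfolding edge_def ladder_def
      using Suc.prems im by (auto simp: ladder_trans_def intro!: exI[of _ sU])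
  moreover have "(edge m (ladder m x y sU sD))\<^sup>*\<^sup>* (i + 1) m" using Suc by simp
  ultimately show ?case by (rule converse_rtranclp_into_rtranclp)
qed

lemma parsimonious_game_ladder:
  assumes m: "m \<ge> 3" and x: "0 < x" "x \<le> 1" and y: "0 < y" "y \<le> 1" and UD: "sU \<noteq> sD"
  shows "parsimonious_game sg m (ladder m x y sU sD) 1 2"
proof -
  let ?P = "ladder m x y sU sD"
  have tr: "trans ?P = ladder_trans m x y sU sD" unfolding ladder_def by simp
  have nn: "0 \<le> ladder_trans m x y sU sD i s j" for i s j unfolding ladder_trans_def
    using x y by auto
  have ind: "(\<Sum>j=1..m. if j = b then (1::real) else 0) = 1" if "b \<in> {1..m}" for b
    using that by (simp add: sum.delta)
  have proto: "is_protocol m ?P"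
    unfolding is_protocol_def tr
      using nn ladder_trans_sum[OF m _ UD] ind[of 3] m by (auto simp: ladder_def)
  have absi: "absorbing ?P i \<longleftrightarrow> i \<le> 2" if "i \<ge> 1" "i \<le> m" for i
  proof
    assume a: "absorbing ?P i"
    show "i \<le> 2"
    proof (rule ccontr)
      assume "\<not> i \<le> 2"
      then have "ladder_trans m x y sU sD i sU i \<noteq> 1" unfolding ladder_trans_def using x by auto
      then show False using a unfolding absorbing_def tr by blast
    qed
  qed (auto simp: absorbing_def tr ladder_trans_def)
  have absorbing_states: "{i\<in>{1..m}. absorbing ?P i} = {1, 2}" using m absi by auto
  have e2: "j = 2" if "edge m ?P 2 j" for j
    using that unfolding edge_def tr ladder_trans_def by (auto split: if_splits)
  have na: "transient m ?P i \<and> act ?P i = 0" if i: "i \<in> {1..m}" "\<not> absorbing ?P i" for i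
  proof -
    have i3: "i \<ge> 3" using i absi by auto
    have "(edge m ?P)\<^sup>*\<^sup>* i m" using ladder_reaches_top[OF m x(1) i3] i by auto
    moreover have "edge m ?P m 2" unfolding edge_def tr ladder_trans_def
      using m x by (auto intro!: exI[of _ sU])
    ultimately have "(edge m ?P)\<^sup>*\<^sup>* i 2" by (rule rtranclp.rtrancl_into_rtrancl)
    moreover have "\<not> (edge m ?P)\<^sup>*\<^sup>* 2 i" using rtranclp_edge_only_self[of m ?P 2 i] e2 i3 by auto
    ultimately have "transient m ?P i" unfolding transient_def by blast
    then show ?thesis using i3 by (simp add: ladder_def)
  qed
  show ?thesis
    by unfold_locales (use proto pos psum m absorbing_states na in \<open>auto simp: ladder_def\<close>)
qed

text \<open>
  Up to the factor \<open>1 / ladder_potential m x y r 2\<close>, the probability of absorption in state 2;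
  here \<open>r = sg \<theta> sD / sg \<theta> sU\<close>.
\<close>

definition ladder_potential :: "nat \<Rightarrow> real \<Rightarrow> real \<Rightarrow> real \<Rightarrow> nat \<Rightarrow> real" where
  "ladder_potential m x y r j = (if j = 1 then 0 else if j
      = 2 then 1 + y * (\<Sum>l=1..m-3. r ^ l) + y * r ^ (m - 2) / x
     else 1 + y * (\<Sum>l=1..j-3. r ^ l))"

lemma ladder_potential_harmonic:
  fixes \<theta> :: bool
  assumes m: "m \<ge> 3" and x: "0 < x" and UD: "sU \<noteq> sD"
    and i: "3 \<le> i" "i \<le> m"
  defines "r \<equiv> sg \<theta> sD / sg \<theta> sU"
  shows "(\<Sum>j\<in>{1..m}. (\<Sum>s\<in>UNIV. sg \<theta> s * ladder_trans m x y sU sD i s j)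
      * ladder_potential m x y r j) = ladder_potential m x y r i"
proof -
  let ?V = "ladder_potential m x y r"
  define E where "E s = (\<Sum>j\<in>{1..m}. ladder_trans m x y sU sD i s j * ?V j)" for s
  have ir: "i \<in> {1..m}" using i by auto
  have Es: "E s = (if s = sU then (if i < m then ?V (i + 1) else x * ?V 2 + (1 - x) * ?V i)
     else if s = sD then (if 3 < i then ?V (i - 1) else y * ?V 1 + (1 - y) * ?V i) else ?V i)" for s
    unfolding E_def using ladder_trans_expectation[OF m ir UD, of x y s ?V] i by simp
  have lhs: "(\<Sum>j\<in>{1..m}. (\<Sum>s\<in>UNIV. sg \<theta> s * ladder_trans m x y sU sD i s j) * ?V j)
      = (\<Sum>s\<in>UNIV. sg \<theta> s * E s)"
    unfolding E_def by (simp add: sum_distrib_right sum_distrib_left mult.assoc, rule sum.swap)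
  have split: "(\<Sum>s\<in>UNIV. sg \<theta> s * E s) = ?V i + (sg \<theta> sU * (E sU - ?V i) + sg \<theta> sD * (E sD - ?V i))"
  proof -
    have "(\<Sum>s\<in>UNIV. sg \<theta> s * E s) = (\<Sum>s\<in>UNIV. sg \<theta> s * ?V i) + (\<Sum>s\<in>UNIV. sg \<theta> s * (E s - ?V i))"
      by (simp add: sum.distrib[symmetric] algebra_simps)
    also have "(\<Sum>s\<in>UNIV. sg \<theta> s * ?V i) = ?V i"
      using psum[of \<theta>] by (simp add: sum_distrib_right[symmetric])
    also have "(\<Sum>s\<in>UNIV. sg \<theta> s * (E s - ?V i)) = (\<Sum>s\<in>{sU, sD}. sg \<theta> s * (E s - ?V i))"
      by (rule sum.mono_neutral_right) (auto simp: Es)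
    also have "\<dots> = sg \<theta> sU * (E sU - ?V i) + sg \<theta> sD * (E sD - ?V i)" using UD by simp
    finally show ?thesis .
  qed
  have VT: "?V j = 1 + y * (\<Sum>l=1..j-3. r ^ l)" if "3 \<le> j" for j
    using that unfolding ladder_potential_def by simp
  have up: "E sU - ?V i = y * r ^ (i - 2)"
  proof (cases "i < m")
    case True
    have "i + 1 - 3 = Suc (i - 3)" "i - 2 = Suc (i - 3)" using i by auto
    then have "?V (i + 1) - ?V i = y * r ^ (i - 2)"
      using VT[of "i+1"] VT[of i] i by (simp add: algebra_simps)
    then show ?thesis using True Es[of sU] by simp
  next
    case False
    then have im: "i = m" using i by simp
    have "?V 2 - ?V m = y * r ^ (m - 2) / x" using VT[of m] m unfolding ladder_potential_def by simp
    then have "x * ?V 2 + (1 - x) * ?V i - ?V i = y * r ^ (i - 2)"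
      using x im by (simp add: algebra_simps)
    then show ?thesis using False Es[of sU] by simp
  qed
  have down: "E sD - ?V i = - (y * r ^ (i - 3))"
  proof (cases "3 < i")
    case True
    have "i - 1 - 3 = i - 4" "i - 3 = Suc (i - 4)" using True by auto
    then have "?V (i - 1) - ?V i = - (y * r ^ (i - 3))"
      using VT[of "i-1"] VT[of i] True by (simp add: algebra_simps)
    then show ?thesis using True Es[of sD] UD by simp
  next
    case False
    then have i3: "i = 3" using i by simp
    have "?V 3 = 1" unfolding ladder_potential_def by simp
    moreover have "?V 1 = 0" unfolding ladder_potential_def by simp
    ultimately show ?thesis using False Es[of sD] UD i3 by (simp add: algebra_simps)
  qed
  have bal: "sg \<theta> sU * (y * r ^ (i - 2)) = sg \<theta> sD * (y * r ^ (i - 3))"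
  proof -
    have "i - 2 = Suc (i - 3)" using i by auto
    then have "sg \<theta> sU * (y * r ^ (i - 2)) = (sg \<theta> sU * r) * (y * r ^ (i - 3))"
      by (simp add: algebra_simps)
    also have "sg \<theta> sU * r = sg \<theta> sD" unfolding r_def using pos[of \<theta> sU] by simp
    finally show ?thesis .
  qed
  show ?thesis unfolding lhs split up down using bal by simp
qed

lemma probH_ladder:
  fixes \<theta> :: bool
  assumes m: "m \<ge> 3" and x: "0 < x" "x \<le> 1" and y: "0 < y" "y \<le> 1" and UD: "sU \<noteq> sD"
  defines "r \<equiv> sg \<theta> sD / sg \<theta> sU"
  shows "probH m sg (ladder m x y sU sD) never_stop \<theta>
      = 1 / (1 + y * (\<Sum>l=1..m-3. r ^ l) + y * r ^ (m - 2) / x)"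
proof -
  let ?P = "ladder m x y sU sD"
  let ?V = "ladder_potential m x y r"
  define V2 where "V2 = 1 + y * (\<Sum>l=1..m-3. r ^ l) + y * r ^ (m - 2) / x"
  have r0: "0 \<le> r" unfolding r_def using pos[of \<theta> sD] pos[of \<theta> sU] by (simp add: less_imp_le)
  have V2pos: "V2 > 0"
  proof -
    have "0 \<le> (\<Sum>l=1..m-3. r ^ l)" using r0 by (intro sum_nonneg) auto
    moreover have "0 \<le> y * r ^ (m - 2) / x" using r0 x y by simp
    ultimately show ?thesis unfolding V2_def using y by (smt (verit) mult_nonneg_nonneg)
  qed
  have V2eq: "?V 2 = V2" unfolding ladder_potential_def V2_def by simp
  have game: "parsimonious_game sg m ?P 1 2" by (rule parsimonious_game_ladder[OF m x y UD])
  have absi: "absorbing ?P i" if "i \<le> 2" for i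
    using that by (auto simp: absorbing_def ladder_def ladder_trans_def)
  define w where "w j = ?V j / V2" for j
  have "probH m sg ?P never_stop \<theta> * w 2 + probL m sg ?P never_stop \<theta> * w 1
      = (\<Sum>j\<in>{1..m}. init ?P j * w j)"
  proof (rule probH_probL_harmonic[OF game])
    fix i assume i: "i \<in> {1..m}" "\<not> absorbing ?P i"
    then have "\<not> i \<le> 2" using absi[of i] by blast
    then have i3: "3 \<le> i" "i \<le> m" using i by auto
    have "(\<Sum>j\<in>{1..m}. (\<Sum>s\<in>UNIV. sg \<theta> s * trans ?P i s j) * w j)
        = (\<Sum>j\<in>{1..m}. (\<Sum>s\<in>UNIV. sg \<theta> s * ladder_trans m x y sU sD i s j) * ?V j) / V2"
      unfolding w_def ladder_def by (simp add: sum_divide_distrib)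
    also have "\<dots> = w i"
    proof -
      have hv: "(\<Sum>j\<in>{1..m}. (\<Sum>s\<in>UNIV. sg \<theta> s * ladder_trans m x y sU sD i s j)
          * ladder_potential m x y (sg \<theta> sD / sg \<theta> sU) j)
          = ladder_potential m x y (sg \<theta> sD / sg \<theta> sU) i"
        by (rule ladder_potential_harmonic[OF m x(1) UD i3])
      show ?thesis unfolding w_def r_def hv ..
    qed
    finally show "(\<Sum>j\<in>{1..m}. (\<Sum>s\<in>UNIV. sg \<theta> s * trans ?P i s j) * w j) = w i" .
  qed
  moreover have "w 2 = 1" unfolding w_def V2eq using V2pos by simp
  moreover have "w 1 = 0" unfolding w_def ladder_potential_def by simp
  moreover have "(\<Sum>j\<in>{1..m}. init ?P j * w j) = w 3"
    unfolding ladder_def using sum_indicator_mult[of 3 m w] m by simp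
  moreover have "w 3 = 1 / V2" unfolding w_def ladder_potential_def by simp
  ultimately show ?thesis unfolding V2_def by simp
qed

lemma ladder_UR_val_ge:
  assumes m: "m \<ge> 3" and UD: "sU \<noteq> sD" and z: "0 < z" and p: "0 < p" "p < 1"
    and d: "0 < \<delta>" "\<delta> \<le> 1" "z * \<delta> \<le> 1"
  defines "rT \<equiv> sg True sD / sg True sU" and "rF \<equiv> sg False sD / sg False sU"
  shows "p * (1 / (1 + z * rT ^ (m - 2))) + (1 - p) * (1 - 1 / (1 + z * rF ^ (m - 2)))
      - p * z * \<delta> * (\<Sum>l=1..m-3. rT ^ l) \<le> UR_val m sg p (ladder m \<delta> (z * \<delta>) sU sD)"
proof -
  let ?P = "ladder m \<delta> (z * \<delta>) sU sD :: 's protocol"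
  have r0: "0 \<le> rT" "0 \<le> rF" unfolding rT_def rF_def using pos by (simp_all add: less_imp_le)
  define ST where "ST = (\<Sum>l=1..m-3. rT ^ l)"
  define SF where "SF = (\<Sum>l=1..m-3. rF ^ l)"
  have S0: "0 \<le> ST" "0 \<le> SF" unfolding ST_def SF_def using r0 by (auto intro: sum_nonneg)
  have y0: "0 < z * \<delta>" using z d by simp
  have game: "parsimonious_game sg m ?P 1 2"
    by (rule parsimonious_game_ladder[OF m d(1,2) y0 d(3) UD])
  have "probH m sg ?P never_stop True = 1 / (1 + z * rT ^ (m - 2) + z * \<delta> * ST)"
    using probH_ladder[OF m d(1,2) y0 d(3) UD, of True] d
      unfolding ST_def rT_def by (simp add: ac_simps)
  then have lT: "1 / (1 + z * rT ^ (m - 2)) - z * \<delta> * ST \<le> probH m sg ?P never_stop True"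
    using inverse_one_plus_add_bounds(1)[of "z * rT ^ (m - 2)" "z * \<delta> * ST"] z r0 S0 d by simp
  have "probH m sg ?P never_stop False = 1 / (1 + z * rF ^ (m - 2) + z * \<delta> * SF)"
    using probH_ladder[OF m d(1,2) y0 d(3) UD, of False] d
      unfolding SF_def rF_def by (simp add: ac_simps)
  then have uF: "probH m sg ?P never_stop False \<le> 1 / (1 + z * rF ^ (m - 2))"
    using inverse_one_plus_add_bounds(2)[of "z * rF ^ (m - 2)" "z * \<delta> * SF"] z r0 S0 d by simp
  have "p * (1 / (1 + z * rT ^ (m - 2)) - z * \<delta> * ST) + (1 - p) * (1 - 1 / (1 + z * rF ^ (m - 2)))
      \<le> p * probH m sg ?P never_stop True + (1 - p) * (1 - probH m sg ?P never_stop False)"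
    using lT uF p by (intro add_mono mult_left_mono) auto
  also have "\<dots> = UR_val m sg p ?P" by (rule parsimonious_payoffs(1)[OF game p, symmetric])
  finally show ?thesis unfolding ST_def by (simp add: algebra_simps)
qed

text \<open>
  Letting the absorption probabilities at the two ends of the ladder vanish at the fixed ratio
  \<open>z\<close>, the receiver's payoff approaches the value below.
\<close>

lemma ladder_UR_sup_bound:
  assumes m: "m \<ge> 3" and UD: "sU \<noteq> sD" and z: "0 < z" and p: "0 < p" "p < 1"
  defines "rT \<equiv> sg True sD / sg True sU" and "rF \<equiv> sg False sD / sg False sU"
  shows "p * (1 / (1 + z * rT ^ (m - 2))) + (1 - p) * (1 - 1 / (1 + z * rF ^ (m - 2))) \<le> UR_sup m sg p"
proof (rule field_le_epsilon)
  fix e :: real assume e: "0 < e"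
  define ST where "ST = (\<Sum>l=1..m-3. rT ^ l)"
  have ST0: "0 \<le> ST" unfolding ST_def rT_def
    using pos by (auto intro!: sum_nonneg simp: less_imp_le)
  define \<delta> where "\<delta> = min 1 (min (1 / z) (e / (p * z * ST + 1)))"
  have den: "0 < p * z * ST + 1" using p z ST0 by (simp add: add_nonneg_pos)
  have "\<delta> \<le> 1 / z" unfolding \<delta>_def by simp
  then have d: "0 < \<delta>" "\<delta> \<le> 1" "z * \<delta> \<le> 1"
    unfolding \<delta>_def using z e den by (simp_all add: field_simps)
  have "\<delta> \<le> e / (p * z * ST + 1)" unfolding \<delta>_def by simp
  then have "\<delta> * (p * z * ST + 1) \<le> e" using den by (simp add: le_divide_eq)
  then have pe: "p * z * \<delta> * ST \<le> e" using d by (simp add: algebra_simps)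
  have "UR_val m sg p (ladder m \<delta> (z * \<delta>) sU sD) \<le> UR_sup m sg p"
    using UR_val_le_UR_sup[OF parsimonious_game_imp_is_protocol[OF parsimonious_game_ladder]] m d z UD p
    by auto
  then show "p * (1 / (1 + z * rT ^ (m - 2))) + (1 - p) * (1 - 1 / (1 + z * rF ^ (m - 2)))
      \<le> UR_sup m sg p + e"
    using ladder_UR_val_ge[OF m UD z p d] pe unfolding rT_def rF_def ST_def by linarith
qed

lemma frontier_le_UR_sup:
  assumes m: "m \<ge> 3" and gamma: "gamma sg > 1" and p: "0 < p" "p < 1" and x: "0 < x" "x < 1"
  shows "p * x + (1 - p) * (1 - frontier (gamma sg ^ (m - 2)) x) \<le> UR_sup m sg p"
proof -
  let ?G = "gamma sg ^ (m - 2)"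
  obtain sU sD where sU: "sg True sU / sg False sU = max_lr" and sD: "sg True sD / sg False sD = min_lr"
    by (rule extreme_signals)
  have UD: "sU \<noteq> sD" using gamma sU sD min_lr_pos unfolding gamma_eq by auto
  define rT where "rT = sg True sD / sg True sU"
  define rF where "rF = sg False sD / sg False sU"
  have rT0: "rT > 0" unfolding rT_def using pos by simp
  have "gamma sg = (sg True sU / sg False sU) / (sg True sD / sg False sD)"
    unfolding gamma_eq sU sD ..
  then have rF: "rF = gamma sg * rT"
    unfolding rF_def rT_def using pos[of True sU] pos[of False sU] pos[of True sD] pos[of False sD]
    by (simp add: field_simps)
  define z where "z = (1 / x - 1) / rT ^ (m - 2)"
  have z0: "z > 0" unfolding z_def using x rT0 by (simp add: field_simps)
  have eT: "1 + z * rT ^ (m - 2) = 1 / x" unfolding z_def using rT0 by simp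
  have "1 + z * rF ^ (m - 2) = 1 + (1 / x - 1) * ?G"
    unfolding z_def rF using rT0 by (simp add: power_mult_distrib)
  also have "\<dots> = (?G - (?G - 1) * x) / x" using x by (simp add: field_simps)
  finally have eF: "1 + z * rF ^ (m - 2) = (?G - (?G - 1) * x) / x" .
  have "p * (1 / (1 + z * rT ^ (m - 2))) + (1 - p) * (1 - 1 / (1 + z * rF ^ (m - 2))) \<le> UR_sup m sg p"
    unfolding rT_def rF_def by (rule ladder_UR_sup_bound[OF m UD z0 p])
  then show ?thesis unfolding eT eF frontier_def by simp
qed

end

section \<open>Receiver-optimal sequences\<close>

locale optimal_sequence = signals sg for sg :: "bool \<Rightarrow> 's::finite \<Rightarrow> real" +
  fixes m :: nat and p :: real and P :: "nat \<Rightarrow> 's protocol"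
  assumes m: "m \<ge> 2" and p: "0 < p" "p < 1"
    and pars: "\<And>n. parsimonious m (P n)"
    and opt: "(\<lambda>n. UR_val m sg p (P n)) \<longlonglongrightarrow> UR_sup m sg p"
begin

abbreviation G where "G \<equiv> gamma sg ^ (m - 2)"

definition x_seq where "x_seq n = probH m sg (P n) never_stop True"
definition y_seq where "y_seq n = probH m sg (P n) never_stop False"
definition objective where "objective n = p * x_seq n - (1 - p) * y_seq n"

lemma payoffs:
  "0 \<le> x_seq n" "x_seq n \<le> 1" "0 \<le> y_seq n" "y_seq n \<le> 1"
  "x_seq n * (1 - y_seq n) \<le> G * (y_seq n * (1 - x_seq n))"
  "UR_val m sg p (P n) = objective n + (1 - p)"
  "US_val m sg p (P n) = p * x_seq n + (1 - p) * y_seq n"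
proof -
  obtain i0 i1 where "parsimonious_game sg m (P n) i0 i1"
    using parsimonious_game_of_parsimonious[OF pars] by blast
  from parsimonious_payoffs[OF this p] show
    "0 \<le> x_seq n" "x_seq n \<le> 1" "0 \<le> y_seq n" "y_seq n \<le> 1"
    "x_seq n * (1 - y_seq n) \<le> G * (y_seq n * (1 - x_seq n))"
    "UR_val m sg p (P n) = objective n + (1 - p)"
    "US_val m sg p (P n) = p * x_seq n + (1 - p) * y_seq n"
    unfolding x_seq_def y_seq_def objective_def by (auto simp: algebra_simps)
qed

lemma y_seq_eq: "y_seq = (\<lambda>n. (p * x_seq n - objective n) / (1 - p))"
  and x_seq_eq: "x_seq = (\<lambda>n. (objective n + (1 - p) * y_seq n) / p)"
  using p unfolding objective_def by (auto simp: field_simps)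

lemma limits_of_gap:
  assumes c: "c > 0" and gap: "\<And>n. objective n \<le> V - c * (a n - L) ^ 2"
    and attained: "V + (1 - p) \<le> UR_sup m sg p"
  shows "objective \<longlonglongrightarrow> V" and "a \<longlonglongrightarrow> L"
proof -
  have le: "objective n \<le> V" for n
    using gap[of n] c by (smt (verit) mult_nonneg_nonneg zero_le_power2)
  have "UR_sup m sg p \<le> V + (1 - p)"
    by (rule LIMSEQ_le_const2[OF opt]) (use le payoffs(6) in auto)
  then have "UR_sup m sg p = V + (1 - p)" using attained by simp
  moreover have "(\<lambda>n. UR_val m sg p (P n) - (1 - p)) \<longlonglongrightarrow> UR_sup m sg p - (1 - p)"
    by (intro tendsto_diff opt tendsto_const)
  ultimately show obj: "objective \<longlonglongrightarrow> V" unfolding payoffs(6) by simp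
  show "a \<longlonglongrightarrow> L" by (rule tendsto_of_quadratic_gap[OF c gap obj])
qed

lemma US_limit_interior:
  assumes G: "G > kappa p"
  shows "(\<lambda>n. US_val m sg p (P n)) \<longlonglongrightarrow> p + (2 * p - 1) / (G - 1)"
proof -
  define D where "D = sqrt ((1 - p) * G / p)"
  define x where "x = (G - D) / (G - 1)"
  note opt_x = interior_optimum[OF p G, folded D_def, folded x_def]
  define V where "V = p * x - (1 - p) * frontier G x"
  have m3: "m \<ge> 3" using opt_x(1) m by (cases "m = 2") auto
  have gamma1: "gamma sg > 1" using opt_x(1) gamma_ge1 by (cases "gamma sg = 1") auto
  have gap: "objective n \<le> V - p * (G - 1) / G * (x_seq n - x) ^ 2" for n
    using interior_objective_gap[OF opt_x(1) payoffs(1,2,5) p opt_x(2,3) x_def]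
    unfolding objective_def V_def opt_x(6) by simp
  have "V + (1 - p) \<le> UR_sup m sg p"
    using frontier_le_UR_sup[OF m3 gamma1 p opt_x(4,5)] unfolding V_def by (simp add: algebra_simps)
  then have obj: "objective \<longlonglongrightarrow> V" and xlim: "x_seq \<longlonglongrightarrow> x"
    using limits_of_gap[OF _ gap] opt_x(1) p by auto
  have "y_seq \<longlonglongrightarrow> (p * x - V) / (1 - p)"
    unfolding y_seq_eq using p by (intro tendsto_intros obj xlim) auto
  then have "y_seq \<longlonglongrightarrow> frontier G x" unfolding V_def using p by simp
  then have "(\<lambda>n. p * x_seq n + (1 - p) * y_seq n) \<longlonglongrightarrow> p * x + (1 - p) * frontier G x"
    by (intro tendsto_intros xlim)
  then show ?thesis unfolding payoffs(7) opt_x(7) .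
qed

lemma US_limit_high_prior:
  assumes G: "\<not> G > kappa p" and p2: "p > 1/2"
  shows "(\<lambda>n. US_val m sg p (P n)) \<longlonglongrightarrow> 1"
proof -
  have "kappa p = p / (1 - p)" using p p2 unfolding kappa_def by (simp add: field_simps max_def)
  then have Gp: "(1 - p) * G \<le> p" using G p by (simp add: not_less le_divide_eq mult.commute)
  have gap: "objective n \<le> (2 * p - 1) - (2 * p - 1) * (x_seq n - 1) ^ 2" for n
    using corner_objective_gap[OF _ payoffs(1,2,5) p2 p(2) Gp] gamma_ge1
    unfolding objective_def by (simp add: power2_commute)
  have "(2 * p - 1) + (1 - p) \<le> UR_sup m sg p" using prior_le_UR_sup(1)[OF m p] by simp
  then have obj: "objective \<longlonglongrightarrow> 2 * p - 1" and xlim: "x_seq \<longlonglongrightarrow> 1"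
    using limits_of_gap[OF _ gap] p2 by auto
  have "y_seq \<longlonglongrightarrow> (p * 1 - (2 * p - 1)) / (1 - p)"
    unfolding y_seq_eq using p by (intro tendsto_intros obj xlim) auto
  then have "y_seq \<longlonglongrightarrow> 1" using p by simp
  then have "(\<lambda>n. p * x_seq n + (1 - p) * y_seq n) \<longlonglongrightarrow> p * 1 + (1 - p) * 1"
    by (intro tendsto_intros xlim)
  then show ?thesis unfolding payoffs(7) by simp
qed

text \<open>The case \<open>p < 1/2\<close> is the mirror image of \<open>p > 1/2\<close> under \<open>(p, x, y) \<mapsto> (1 - p, 1 - y, 1 - x)\<close>.\<close>

lemma US_limit_low_prior:
  assumes G: "\<not> G > kappa p" and p2: "p < 1/2"
  shows "(\<lambda>n. US_val m sg p (P n)) \<longlonglongrightarrow> 0"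
proof -
  have "kappa p = (1 - p) / p" using p p2 unfolding kappa_def by (simp add: field_simps max_def)
  then have Gp: "(1 - (1 - p)) * G \<le> 1 - p"
    using G p by (simp add: not_less le_divide_eq mult.commute)
  have G1: "1 \<le> G" using gamma_ge1 by simp
  have gap: "objective n \<le> 0 - (1 - 2 * p) * (y_seq n - 0) ^ 2" for n
  proof -
    have "0 \<le> 1 - y_seq n" "1 - y_seq n \<le> 1" using payoffs(3,4) by auto
    moreover have "(1 - y_seq n) * (1 - (1 - x_seq n)) \<le> G * ((1 - x_seq n) * (1 - (1 - y_seq n)))"
      using payoffs(5)[of n] by (simp add: algebra_simps)
    ultimately have "(1 - p) * (1 - y_seq n) - (1 - (1 - p)) * (1 - x_seq n)
        \<le> (2 * (1 - p) - 1) - (2 * (1 - p) - 1) * (1 - (1 - y_seq n)) ^ 2"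
      by (rule corner_objective_gap[OF G1 _ _ _ _ _ Gp]) (use p p2 in auto)
    then show ?thesis unfolding objective_def by (simp add: algebra_simps)
  qed
  have "0 + (1 - p) \<le> UR_sup m sg p" using prior_le_UR_sup(2)[OF m p] by simp
  then have obj: "objective \<longlonglongrightarrow> 0" and ylim: "y_seq \<longlonglongrightarrow> 0"
    using limits_of_gap[OF _ gap] p2 by auto
  have "x_seq \<longlonglongrightarrow> (0 + (1 - p) * 0) / p"
    unfolding x_seq_eq using p by (intro tendsto_intros obj ylim) auto
  then have "(\<lambda>n. p * x_seq n + (1 - p) * y_seq n) \<longlonglongrightarrow> p * 0 + (1 - p) * 0"
    by (intro tendsto_intros ylim) simp
  then show ?thesis unfolding payoffs(7) by simp
qed

end

theorem theorem3:
  fixes m :: nat and sg :: "bool \<Rightarrow> 's::finite \<Rightarrow> real" and p :: real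
    and P :: "nat \<Rightarrow> 's protocol"
  assumes m: "m \<ge> 2"
    and p: "0 < p" "p < 1"
    and pi_pos: "\<And>\<theta> s. sg \<theta> s > 0"
    and pi_sum: "\<And>\<theta>. (\<Sum>s\<in>UNIV. sg \<theta> s) = 1"
    and pi_ne: "sg True \<noteq> sg False"
    and pars: "\<And>n. parsimonious m (P n)"
    and opt: "(\<lambda>n. UR_val m sg p (P n)) \<longlonglongrightarrow> UR_sup m sg p"
    and excl: "\<not> (gamma sg ^ (m - 2) \<le> kappa p \<and> p = 1/2)"
  shows "(\<lambda>n. US_val m sg p (P n)) \<longlonglongrightarrow>
           (if gamma sg ^ (m - 2) > kappa p then p + (2 * p - 1) / (gamma sg ^ (m - 2) - 1)
            else if p > 1/2 then 1 else 0)"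
proof -
  interpret optimal_sequence sg m p P
    using m p pi_pos pi_sum pars opt by unfold_locales auto
  show ?thesis
  proof (cases "gamma sg ^ (m - 2) > kappa p")
    case True
    then show ?thesis using US_limit_interior by simp
  next
    case False
    then have "p \<noteq> 1/2" using excl by auto
    then show ?thesis using False US_limit_high_prior US_limit_low_prior by (cases "p > 1/2") auto
  qed
qed

end
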